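(* Let $n\ge2$ and $0\le k\le n-1$. The following sets are equinumerous: (1) the set of ASM-recurrent configurations $c$ on $F_n$ with $\mathrm{level}(c)=k$; (2) the set of subgraphs $(V,E)$ of $P_n$ with $n\in V$ and $|E|=k$; (3) the set of Kimberling paths ending at $(n-k,k)$. In particular, if $T_{F_n}$ is the Tutte polynomial of $F_n$, then $$T_{F_n}(1,x)=\sum_{k=0}^{n-1}\big|\mathrm{Kimb}(n-k,k)\big|\,x^k,\qquad\text{where }\big|\mathrm{Kimb}(n-k,k)\big|=\sum_{r=0}^{n-k-1}\binom{n-k-1}{r}\binom{r+k}{r}.$$
   Context: $P_n$: path on $[n]$ with edges $\{i,i+1\}$; $F_n$: $P_n$ plus sink $0$ adjacent to all of $[n]$. A subgraph of $P_n$ is $(V,E)$ with $V\subseteq[n]$ non-empty and $E$ a set of edges of $P_n$ with both endpoints in $V$. Sandpile setting: configurations $c\in\mathbb{Z}_{\ge0}^n$, stable iff $c_i<\deg(i)$ (on $F_n$: $\{0,1,2\}^n$ with $c_1,c_n\le1$); ASM: unstable vertex loses $\deg(i)$ grains, one to each neighbour (grains to sink vanish); Markov chain adds a grain at a random vertex (fully supported distribution) and stabilises; ASM-recurrent = recurrent state. $\mathrm{level}(c)=\sum_ic_i+\deg(0)-|E(F_n)|=\sum_i c_i-(n-1)$. A Kimberling path is a lattice path from $(0,0)$ with steps $(a,b)$, $a\ge1$, $b\ge0$ integers (any length); $\mathrm{Kimb}(i,j)$ is the set of such paths ending at $(i,j)$. $T_G(x,y)$ is the standard Tutte polynomial. 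*)

theory Defs
  imports Complex_Main
begin

text \<open>Edges are two-element sets of vertices. P_n has vertices 1..n; F_n additionally
  has the sink 0 adjacent to every vertex of [n].\<close>

definition Pn_edges :: "nat \<Rightarrow> nat set set" where
  "Pn_edges n = {{i, i + 1} | i. 1 \<le> i \<and> i < n}"

definition Fn_edges :: "nat \<Rightarrow> nat set set" where
  "Fn_edges n = Pn_edges n \<union> {{0, i} | i. 1 \<le> i \<and> i \<le> n}"

definition Fn_vertices :: "nat \<Rightarrow> nat set" where
  "Fn_vertices n = {0..n}"

definition Fn_deg :: "nat \<Rightarrow> nat \<Rightarrow> nat" where
  "Fn_deg n v = card {e \<in> Fn_edges n. v \<in> e}"

definition configs :: "nat \<Rightarrow> (nat \<Rightarrow> nat) set" where
  "configs n = {c. \<forall>i. i \<notin> {1..n} \<longrightarrow> c i = 0}"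

definition stable :: "nat \<Rightarrow> (nat \<Rightarrow> nat) \<Rightarrow> bool" where
  "stable n c \<longleftrightarrow> c \<in> configs n \<and> (\<forall>i\<in>{1..n}. c i < Fn_deg n i)"

text \<open>Toppling of an unstable vertex i: it loses deg(i) grains, one to each neighbour;
  grains sent to the sink vanish.\<close>

definition topple :: "nat \<Rightarrow> nat \<Rightarrow> (nat \<Rightarrow> nat) \<Rightarrow> (nat \<Rightarrow> nat)" where
  "topple n i c = (\<lambda>j. if j = i then c j - Fn_deg n i
                       else if j \<noteq> 0 \<and> {i, j} \<in> Fn_edges n then c j + 1
                       else c j)"

definition topple_step :: "nat \<Rightarrow> (nat \<Rightarrow> nat) \<Rightarrow> (nat \<Rightarrow> nat) \<Rightarrow> bool" where
  "topple_step n c d \<longleftrightarrow> (\<exists>i\<in>{1..n}. Fn_deg n i \<le> c i \<and> d = topple n i c)"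

definition stabilises_to :: "nat \<Rightarrow> (nat \<Rightarrow> nat) \<Rightarrow> (nat \<Rightarrow> nat) \<Rightarrow> bool" where
  "stabilises_to n c d \<longleftrightarrow> (topple_step n)\<^sup>*\<^sup>* c d \<and> stable n d"

text \<open>One-step transition relation of the sandpile Markov chain (positive probability):
  add a grain at some vertex of [n] (fully supported distribution) and stabilise.\<close>

definition chain_step :: "nat \<Rightarrow> (nat \<Rightarrow> nat) \<Rightarrow> (nat \<Rightarrow> nat) \<Rightarrow> bool" where
  "chain_step n c d \<longleftrightarrow> stable n c \<and>
     (\<exists>i\<in>{1..n}. stabilises_to n (c(i := c i + 1)) d)"

text \<open>Recurrent state of the finite Markov chain: a stable configuration c such that
  every state reachable from c can reach c back (c lies in a closed communicating class).\<close>

definition ASM_recurrent :: "nat \<Rightarrow> (nat \<Rightarrow> nat) \<Rightarrow> bool" where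
  "ASM_recurrent n c \<longleftrightarrow> stable n c \<and>
     (\<forall>d. (chain_step n)\<^sup>*\<^sup>* c d \<longrightarrow> (chain_step n)\<^sup>*\<^sup>* d c)"

definition level :: "nat \<Rightarrow> (nat \<Rightarrow> nat) \<Rightarrow> int" where
  "level n c = int (\<Sum>i=1..n. c i) + int (Fn_deg n 0) - int (card (Fn_edges n))"

definition subgraphs_Pn :: "nat \<Rightarrow> (nat set \<times> nat set set) set" where
  "subgraphs_Pn n = {(V, E). V \<subseteq> {1..n} \<and> V \<noteq> {} \<and> E \<subseteq> Pn_edges n \<and>
                            (\<forall>e\<in>E. e \<subseteq> V)}"

text \<open>A lattice path from (0,0) is represented by its list of steps (a,b) with a \<ge> 1,
  b \<ge> 0 (b \<ge> 0 automatic for nat); it ends at the sum of its steps.\<close>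

definition Kimb :: "nat \<Rightarrow> nat \<Rightarrow> (nat \<times> nat) list set" where
  "Kimb i j = {ps. (\<forall>s\<in>set ps. 1 \<le> fst s) \<and>
                   sum_list (map fst ps) = i \<and> sum_list (map snd ps) = j}"

definition ncomp :: "nat set \<Rightarrow> nat set set \<Rightarrow> nat" where
  "ncomp V A = card (V // {(u, v). u \<in> V \<and> v \<in> V \<and>
                        (u, v) \<in> ({(x, y). {x, y} \<in> A})\<^sup>*})"

definition graph_rank :: "nat set \<Rightarrow> nat set set \<Rightarrow> nat" where
  "graph_rank V A = card V - ncomp V A"

definition tutte :: "nat set \<Rightarrow> nat set set \<Rightarrow> real \<Rightarrow> real \<Rightarrow> real" where
  "tutte V E x y = (\<Sum>A\<in>Pow E. (x - 1) ^ (graph_rank V E - graph_rank V A) *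
                                 (y - 1) ^ (card A - graph_rank V A))"

end

theory Submission
  imports Defs
begin

text \<open>Each of the three families is counted by a generating function in y, graded by level,
  number of edges, and height of the end point respectively. Removing the vertex n+1 of the path,
  the first step of a lattice path, or the last site of a configuration shows that each of them,
  together with a companion series, satisfies the recursion X (n+1) = (1+y) X n + Y n,
  Y (n+1) = X n + Y n with X 0 = 0, Y 0 = 1; comparing coefficients gives the bijections.
  Recurrence is decided by Dhar's burning criterion: a stable configuration is recurrent iff it
  has no forbidden subconfiguration, which on the fan means that any two zeros are separated by
  a 2. Finally T(1,y) is the sum of (y-1)^nullity over the connected spanning subgraphs of F_n;
  here the companion series runs over the spanning subgraphs with two components, one
  containing the sink and the other the vertex n.\<close>

fun fan_gf_pair :: "real \<Rightarrow> nat \<Rightarrow> real \<times> real" where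
  "fan_gf_pair y 0 = (0, 1)"
| "fan_gf_pair y (Suc n) =
     ((1 + y) * fst (fan_gf_pair y n) + snd (fan_gf_pair y n), fst (fan_gf_pair y n) + snd (fan_gf_pair y n))"

definition fan_gf :: "real \<Rightarrow> nat \<Rightarrow> real" where "fan_gf y n = fst (fan_gf_pair y n)"
definition fan_gf_aux :: "real \<Rightarrow> nat \<Rightarrow> real" where "fan_gf_aux y n = snd (fan_gf_pair y n)"

lemma fan_gf_0 [simp]: "fan_gf y 0 = 0" and fan_gf_aux_0 [simp]: "fan_gf_aux y 0 = 1"
  by (simp_all add: fan_gf_def fan_gf_aux_def)

lemma fan_gf_Suc: "fan_gf y (Suc n) = (1 + y) * fan_gf y n + fan_gf_aux y n"
  and fan_gf_aux_Suc: "fan_gf_aux y (Suc n) = fan_gf y n + fan_gf_aux y n"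
  by (simp_all add: fan_gf_def fan_gf_aux_def)

lemma eq_fan_gf_if_recursion:
  fixes f g :: "nat \<Rightarrow> real"
  assumes "f (Suc 0) = 1" "g (Suc 0) = 1"
    and "\<And>n. 1 \<le> n \<Longrightarrow> f (Suc n) = (1 + y) * f n + g n"
    and "\<And>n. 1 \<le> n \<Longrightarrow> g (Suc n) = f n + g n"
    and "1 \<le> n"
  shows "f n = fan_gf y n"
proof -
  have "f (Suc m) = fan_gf y (Suc m) \<and> g (Suc m) = fan_gf_aux y (Suc m)" for m
    by (induction m) (simp_all add: assms(1-4) fan_gf_Suc fan_gf_aux_Suc)
  then show ?thesis using assms(5) by (metis Suc_pred' less_eq_Suc_le One_nat_def)
qed

lemma sum_power_eq_card_coeffs:
  assumes "finite S" "g ` S \<subseteq> {..m}"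
  shows "(\<Sum>x\<in>S. y ^ g x) = (\<Sum>j\<le>m. real (card {x\<in>S. g x = j}) * (y::real) ^ j)"
proof -
  have "(\<Sum>x\<in>S. y ^ g x) = (\<Sum>j\<le>m. \<Sum>x\<in>{x\<in>S. g x = j}. y ^ g x)"
    by (rule sum.group[OF assms(1) _ assms(2), symmetric]) simp
  also have "\<dots> = (\<Sum>j\<le>m. real (card {x\<in>S. g x = j}) * y ^ j)"
    by (intro sum.cong refl) simp
  finally show ?thesis .
qed

lemma coeffs_eq_if_polyfun_eq:
  fixes c d :: "nat \<Rightarrow> real"
  assumes "\<And>y. (\<Sum>j\<le>m. c j * y ^ j) = (\<Sum>j\<le>m. d j * y ^ j)" "k \<le> m"
  shows "c k = d k"
  using assms polyfun_eq_coeffs[where n = m and c = c and d = d] by blast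

section \<open>Kimberling paths\<close>

lemma sum_list_map_pred:
  "(\<forall>a\<in>set as. 1 \<le> (a::nat)) \<Longrightarrow> sum_list (map (\<lambda>a. a - 1) as) = sum_list as - length as"
proof (induction as)
  case Nil then show ?case by simp
next
  case (Cons a as)
  have "length as \<le> sum_list as"
    using Cons.prems by (induction as) auto
  with Cons show ?case by auto
qed

lemma sum_list_map_Suc: "sum_list (map Suc l) = sum_list l + length l"
  by (induction l) auto

lemma length_le_sum_list_pos: "(\<forall>a\<in>set as. 1 \<le> (a::nat)) \<Longrightarrow> length as \<le> sum_list as"
  by (induction as) auto

lemma finite_lists_sum: "finite {l::nat list. length l = m \<and> sum_list l = N}"
proof -
  have "{l::nat list. length l = m \<and> sum_list l = N} \<subseteq> {l. set l \<subseteq> {0..N} \<and> length l = m}"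
    by (auto simp: member_le_sum_list)
  moreover have "finite {l. set l \<subseteq> {0..N} \<and> length l = m}"
    by (rule finite_lists_length_eq) simp
  ultimately show ?thesis by (rule finite_subset)
qed

lemma card_pos_lists:
  assumes "1 \<le> m" "m \<le> i"
  shows "card {as::nat list. length as = m \<and> (\<forall>a\<in>set as. 1 \<le> a) \<and> sum_list as = i}
         = (i - 1) choose (m - 1)"
proof -
  let ?A = "{as::nat list. length as = m \<and> (\<forall>a\<in>set as. 1 \<le> a) \<and> sum_list as = i}"
  let ?B = "{l::nat list. length l = m \<and> sum_list l = i - m}"
  have "bij_betw (map (\<lambda>a. a - 1)) ?A ?B"
  proof (rule bij_betw_byWitness[where f' = "map Suc"])
    show "\<forall>a\<in>?A. map Suc (map (\<lambda>a. a - 1) a) = a"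
      by (auto intro!: map_idI)
    show "\<forall>a\<in>?B. map (\<lambda>a. a - 1) (map Suc a) = a" by (simp add: map_idI)
    show "map (\<lambda>a. a - 1) ` ?A \<subseteq> ?B" by (force simp: sum_list_map_pred[unfolded One_nat_def])
    show "map Suc ` ?B \<subseteq> ?A" using assms by (auto simp: sum_list_map_Suc)
  qed
  then have "card ?A = card ?B" by (rule bij_betw_same_card)
  also have "\<dots> = (i - m + m - 1) choose (i - m)" by (rule card_length_sum_list)
  also have "\<dots> = (i - 1) choose (m - 1)"
    using assms binomial_symmetric[of "m-1" "i-1"] by (simp add: Suc_diff_le)
  finally show ?thesis .
qed

lemma Kimb_zip:
  "Kimb i j = (\<lambda>(as,bs). zip as bs) ` {(as,bs). length as = length bs \<and> (\<forall>a\<in>set as. 1 \<le> a)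
                 \<and> sum_list as = i \<and> sum_list bs = j}" (is "_ = ?zip ` ?P")
proof
  show "Kimb i j \<subseteq> ?zip ` ?P"
  proof
    fix ps assume "ps \<in> Kimb i j"
    then show "ps \<in> ?zip ` ?P"
      unfolding Kimb_def
      by (intro image_eqI[where x = "(map fst ps, map snd ps)"]) (auto simp: zip_map_fst_snd)
  qed
  show "?zip ` ?P \<subseteq> Kimb i j"
    by (auto simp: Kimb_def set_zip)
qed

lemma Kimb_zip_inj:
  "inj_on (\<lambda>(as,bs). zip as bs) {(as,bs). length as = length (bs::nat list) \<and> (\<forall>a\<in>set as. 1 \<le> (a::nat))
                 \<and> sum_list as = i \<and> sum_list bs = j}"
proof (rule inj_onI, clarsimp)
  fix as bs as' bs' :: "nat list"
  assume h: "length as = length bs" "length as' = length bs'" "zip as bs = zip as' bs'"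
  then have "map fst (zip as bs) = map fst (zip as' bs')" "map snd (zip as bs) = map snd (zip as' bs')"
    by simp_all
  with h show "as = as' \<and> bs = bs'" by (metis map_fst_zip map_snd_zip)
qed

lemma card_Kimb:
  assumes "1 \<le> i"
  shows "card (Kimb i j) = (\<Sum>r=0..i-1. ((i - 1) choose r) * ((r + j) choose r))"
proof -
  let ?P = "{(as,bs). length as = length bs \<and> (\<forall>a\<in>set as. 1 \<le> a)
                 \<and> sum_list as = i \<and> sum_list (bs::nat list) = j}"
  let ?PA = "\<lambda>m. {as::nat list. length as = m \<and> (\<forall>a\<in>set as. 1 \<le> a) \<and> sum_list as = i}"
  let ?PB = "\<lambda>m. {bs::nat list. length bs = m \<and> sum_list bs = j}"
  have finA: "finite (?PA m)" for m
    by (rule finite_subset[OF _ finite_lists_sum[of m i]]) auto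
  have P_eq: "?P = (\<Union>m\<in>{1..i}. ?PA m \<times> ?PB m)"
  proof (intro equalityI subsetI)
    fix x assume "x \<in> ?P"
    then obtain as bs where x: "x = (as, bs)" and h: "length as = length bs" "\<forall>a\<in>set as. 1 \<le> a" "sum_list as = i" "sum_list bs = j" by auto
    have "length as \<le> i" using length_le_sum_list_pos[OF h(2)] h(3) by simp
    moreover have "length as \<noteq> 0" using h(3) assms by auto
    ultimately show "x \<in> (\<Union>m\<in>{1..i}. ?PA m \<times> ?PB m)" using h x by (auto simp: Suc_le_eq)
  qed auto
  have "card (Kimb i j) = card ?P"
    unfolding Kimb_zip by (rule card_image[OF Kimb_zip_inj])
  also have "\<dots> = (\<Sum>m\<in>{1..i}. card (?PA m \<times> ?PB m))"
    unfolding P_eq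
    by (rule card_UN_disjoint) (auto intro!: finite_cartesian_product finA[unfolded One_nat_def] finite_lists_sum)
  also have "\<dots> = (\<Sum>m\<in>{1..i}. ((i - 1) choose (m - 1)) * ((j + m - 1) choose j))"
    by (rule sum.cong) (auto simp: card_cartesian_product card_pos_lists[unfolded One_nat_def] card_length_sum_list)
  also have "\<dots> = (\<Sum>r=0..i-1. ((i - 1) choose r) * ((r + j) choose r))"
  proof -
    have "(\<Sum>m\<in>{1..i}. ((i - 1) choose (m - 1)) * ((j + m - 1) choose j))
        = (\<Sum>r\<in>{0..i-1}. ((i - 1) choose r) * ((j + r) choose j))"
      using assms
      by (intro sum.reindex_bij_witness[where i = Suc and j = "\<lambda>m. m - 1"]) auto
    also have "\<dots> = (\<Sum>r=0..i-1. ((i - 1) choose r) * ((r + j) choose r))"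
      by (rule sum.cong) (auto simp: binomial_symmetric[of j "x + j" for x] add.commute)
    finally show ?thesis .
  qed
  finally show ?thesis .
qed

definition Kimb_antidiag :: "nat \<Rightarrow> (nat \<times> nat) list set" where
  "Kimb_antidiag n = {ps. (\<forall>s\<in>set ps. 1 \<le> fst s) \<and> sum_list (map fst ps) + sum_list (map snd ps) = n}"

text \<open>The recursions for Kimberling paths modify only the first step of a path.\<close>

definition Kimb_antidiag_unit :: "nat \<Rightarrow> (nat \<times> nat) list set" where
  "Kimb_antidiag_unit n = {ps \<in> Kimb_antidiag n. ps \<noteq> [] \<and> fst (hd ps) = 1}"

definition Kimb_gf :: "real \<Rightarrow> nat \<Rightarrow> real" where
  "Kimb_gf y n = (\<Sum>ps\<in>Kimb_antidiag n. y ^ sum_list (map snd ps))"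

definition Kimb_unit_gf :: "real \<Rightarrow> nat \<Rightarrow> real" where
  "Kimb_unit_gf y n = (\<Sum>ps\<in>Kimb_antidiag_unit n. y ^ sum_list (map snd ps))"

lemma length_le_fst: "(\<forall>s\<in>set ps. 1 \<le> fst s) \<Longrightarrow> length ps \<le> sum_list (map fst (ps::(nat\<times>nat) list))"
  by (induction ps) auto

lemma finite_Kimb_antidiag: "finite (Kimb_antidiag n)"
proof -
  have "Kimb_antidiag n \<subseteq> {ps. set ps \<subseteq> {0..n} \<times> {0..n} \<and> length ps \<le> n}"
  proof
    fix ps assume "ps \<in> Kimb_antidiag n"
    then have h: "\<forall>s\<in>set ps. 1 \<le> fst s" "sum_list (map fst ps) + sum_list (map snd ps) = n"
      by (auto simp: Kimb_antidiag_def)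
    have "length ps \<le> n" using length_le_fst[OF h(1)] h(2) by simp
    moreover have "set ps \<subseteq> {0..n} \<times> {0..n}"
    proof
      fix s assume s: "s \<in> set ps"
      have "fst s \<le> sum_list (map fst ps)" using s by (simp add: member_le_sum_list)
      moreover have "snd s \<le> sum_list (map snd ps)" using s by (simp add: member_le_sum_list)
      ultimately show "s \<in> {0..n} \<times> {0..n}" using h(2) by (cases s) auto
    qed
    ultimately show "ps \<in> {ps. set ps \<subseteq> {0..n} \<times> {0..n} \<and> length ps \<le> n}" by simp
  qed
  moreover have "finite {ps. set ps \<subseteq> {0..n} \<times> {0..n} \<and> length ps \<le> n}"
    by (rule finite_lists_length_le) simp
  ultimately show ?thesis by (rule finite_subset)
qed

lemma Kimb_antidiag_nonempty: "ps \<in> Kimb_antidiag n \<Longrightarrow> 1 \<le> n \<Longrightarrow> ps \<noteq> []"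
  by (auto simp: Kimb_antidiag_def)

lemma Kimb_antidiag_Suc_split:
  "Kimb_antidiag (Suc n) = {ps \<in> Kimb_antidiag (Suc n). 2 \<le> fst (hd ps)} \<union> Kimb_antidiag_unit (Suc n)"
proof -
  have "ps \<noteq> [] \<and> 1 \<le> fst (hd ps)" if "ps \<in> Kimb_antidiag (Suc n)" for ps
    using that by (cases ps) (auto simp: Kimb_antidiag_def)
  then show ?thesis by (fastforce simp: Kimb_antidiag_unit_def)
qed

lemma hd_tl_eq: "xs \<noteq> [] \<Longrightarrow> hd xs = x \<Longrightarrow> x # tl xs = xs"
  by auto

lemma Kimb_antidiag_Cons: "ps \<in> Kimb_antidiag n \<Longrightarrow> 1 \<le> n \<Longrightarrow> \<exists>a b r. ps = (a,b) # r"
  by (cases ps) (auto simp: Kimb_antidiag_def)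

lemma bij_Kimb_widen_head: assumes "1 \<le> n"
  shows "bij_betw (\<lambda>ps. (fst (hd ps) + 1, snd (hd ps)) # tl ps) (Kimb_antidiag n) {ps \<in> Kimb_antidiag (Suc n). 2 \<le> fst (hd ps)}"
  apply (rule bij_betw_byWitness[where f' = "\<lambda>ps. (fst (hd ps) - 1, snd (hd ps)) # tl ps"])
  subgoal using Kimb_antidiag_nonempty[OF _ assms] by auto
  subgoal using Kimb_antidiag_nonempty[of _ "Suc n"] by auto
  subgoal
  proof (rule image_subsetI)
    fix ps assume ps: "ps \<in> Kimb_antidiag n"
    then obtain a b r where "ps = (a,b) # r" using Kimb_antidiag_Cons[OF ps assms] by blast
    with ps show "(fst (hd ps) + 1, snd (hd ps)) # tl ps \<in> {ps \<in> Kimb_antidiag (Suc n). 2 \<le> fst (hd ps)}"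
      by (auto simp: Kimb_antidiag_def)
  qed
  subgoal
  proof (rule image_subsetI)
    fix ps assume ps: "ps \<in> {ps \<in> Kimb_antidiag (Suc n). 2 \<le> fst (hd ps)}"
    then obtain a b r where "ps = (a,b) # r" using Kimb_antidiag_Cons[of ps "Suc n"] by auto
    with ps show "(fst (hd ps) - 1, snd (hd ps)) # tl ps \<in> Kimb_antidiag n"
      by (auto simp: Kimb_antidiag_def)
  qed
  done

lemma bij_Kimb_raise_head:
  shows "bij_betw (\<lambda>ps. (1, snd (hd ps) + 1) # tl ps) (Kimb_antidiag_unit n) {ps \<in> Kimb_antidiag (Suc n). fst (hd ps) = 1 \<and> 1 \<le> snd (hd ps)}"
  apply (rule bij_betw_byWitness[where f' = "\<lambda>ps. (1, snd (hd ps) - 1) # tl ps"])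
  subgoal by (auto simp: Kimb_antidiag_unit_def neq_Nil_conv)
  subgoal using Kimb_antidiag_nonempty[of _ "Suc n"] by (auto intro!: hd_tl_eq simp: prod_eq_iff)
  subgoal
  proof (rule image_subsetI)
    fix ps assume ps: "ps \<in> Kimb_antidiag_unit n"
    then obtain a b r where "ps = (a,b) # r" by (auto simp: Kimb_antidiag_unit_def neq_Nil_conv)
    with ps show "(1, snd (hd ps) + 1) # tl ps \<in> {ps \<in> Kimb_antidiag (Suc n). fst (hd ps) = 1 \<and> 1 \<le> snd (hd ps)}"
      by (auto simp: Kimb_antidiag_unit_def Kimb_antidiag_def)
  qed
  subgoal
  proof (rule image_subsetI)
    fix ps assume ps: "ps \<in> {ps \<in> Kimb_antidiag (Suc n). fst (hd ps) = 1 \<and> 1 \<le> snd (hd ps)}"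
    then obtain a b r where "ps = (a,b) # r" using Kimb_antidiag_Cons[of ps "Suc n"] by auto
    with ps show "(1, snd (hd ps) - 1) # tl ps \<in> Kimb_antidiag_unit n"
      by (auto simp: Kimb_antidiag_unit_def Kimb_antidiag_def)
  qed
  done

lemma bij_Kimb_prepend_unit:
  shows "bij_betw (\<lambda>ps. (1, 0) # ps) (Kimb_antidiag n) {ps \<in> Kimb_antidiag (Suc n). hd ps = (1, 0)}"
  apply (rule bij_betw_byWitness[where f' = tl])
  subgoal by simp
  subgoal using Kimb_antidiag_nonempty[of _ "Suc n"] by (auto intro!: hd_tl_eq)
  subgoal by (auto simp: Kimb_antidiag_def)
  subgoal
  proof (rule image_subsetI)
    fix ps assume ps: "ps \<in> {ps \<in> Kimb_antidiag (Suc n). hd ps = (1, 0)}"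
    then obtain a b r where "ps = (a,b) # r" using Kimb_antidiag_Cons[of ps "Suc n"] by auto
    with ps show "tl ps \<in> Kimb_antidiag n"
      by (auto simp: Kimb_antidiag_def)
  qed
  done

lemma Kimb_antidiag_unit_Suc_split:
  "Kimb_antidiag_unit (Suc n) = {ps \<in> Kimb_antidiag (Suc n). fst (hd ps) = 1 \<and> 1 \<le> snd (hd ps)} \<union> {ps \<in> Kimb_antidiag (Suc n). hd ps = (1, 0)}"
  using Kimb_antidiag_nonempty[of _ "Suc n"] by (auto simp: Kimb_antidiag_unit_def prod_eq_iff)

lemma Kimb_unit_gf_Suc: "Kimb_unit_gf y (Suc n) = Kimb_gf y n + y * Kimb_unit_gf y n"
proof -
  let ?w = "\<lambda>ps. y ^ sum_list (map snd (ps::(nat\<times>nat) list))"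
  let ?raised = "{ps \<in> Kimb_antidiag (Suc n). fst (hd ps) = 1 \<and> 1 \<le> snd (hd ps)}"
  let ?prepended = "{ps \<in> Kimb_antidiag (Suc n). hd ps = (1, 0)}"
  have fin: "finite ?raised" "finite ?prepended" using finite_Kimb_antidiag[of "Suc n"] by auto
  have "Kimb_unit_gf y (Suc n) = sum ?w ?raised + sum ?w ?prepended"
    unfolding Kimb_unit_gf_def Kimb_antidiag_unit_Suc_split using fin by (subst sum.union_disjoint) auto
  also have "sum ?w ?raised = (\<Sum>ps\<in>Kimb_antidiag_unit n. ?w ((1, snd (hd ps) + 1) # tl ps))"
    by (rule sum.reindex_bij_betw[OF bij_Kimb_raise_head, symmetric])
  also have "\<dots> = y * Kimb_unit_gf y n" unfolding Kimb_unit_gf_def sum_distrib_left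
    by (intro sum.cong refl) (auto simp: Kimb_antidiag_unit_def neq_Nil_conv)
  also have "sum ?w ?prepended = (\<Sum>ps\<in>Kimb_antidiag n. ?w ((1, 0) # ps))"
    by (rule sum.reindex_bij_betw[OF bij_Kimb_prepend_unit, symmetric])
  also have "\<dots> = Kimb_gf y n" unfolding Kimb_gf_def by simp
  finally show ?thesis by simp
qed

lemma Kimb_gf_Suc:
  assumes "1 \<le> n"
  shows "Kimb_gf y (Suc n) = 2 * Kimb_gf y n + y * Kimb_unit_gf y n"
proof -
  let ?w = "\<lambda>ps. y ^ sum_list (map snd (ps::(nat\<times>nat) list))"
  let ?widened = "{ps \<in> Kimb_antidiag (Suc n). 2 \<le> fst (hd ps)}"
  have "Kimb_gf y (Suc n) = sum ?w ?widened + Kimb_unit_gf y (Suc n)"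
    unfolding Kimb_gf_def Kimb_unit_gf_def
    by (subst Kimb_antidiag_Suc_split, subst sum.union_disjoint)
       (use finite_Kimb_antidiag[of "Suc n"] in \<open>auto simp: Kimb_antidiag_unit_def\<close>)
  also have "sum ?w ?widened = (\<Sum>ps\<in>Kimb_antidiag n. ?w ((fst (hd ps) + 1, snd (hd ps)) # tl ps))"
    by (rule sum.reindex_bij_betw[OF bij_Kimb_widen_head[OF assms], symmetric])
  also have "\<dots> = Kimb_gf y n" unfolding Kimb_gf_def
  proof (intro sum.cong refl)
    fix ps assume "ps \<in> Kimb_antidiag n"
    then obtain a b r where "ps = (a,b)#r" using Kimb_antidiag_Cons[OF _ assms] by blast
    then show "?w ((fst (hd ps) + 1, snd (hd ps)) # tl ps) = ?w ps" by simp
  qed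
  finally show ?thesis by (simp add: Kimb_unit_gf_Suc)
qed

lemma Kimb_antidiag_1: "Kimb_antidiag (Suc 0) = {[(1,0)]}"
proof -
  have "ps \<in> Kimb_antidiag (Suc 0) \<Longrightarrow> ps = [(1,0)]" for ps
    by (cases ps) (auto simp: Kimb_antidiag_def, case_tac list, auto)
  moreover have "[(1,0)] \<in> Kimb_antidiag (Suc 0)" by (simp add: Kimb_antidiag_def)
  ultimately show ?thesis by blast
qed

lemma Kimb_gf_1: "Kimb_gf y (Suc 0) = 1" by (simp add: Kimb_gf_def Kimb_antidiag_1)
lemma Kimb_antidiag_unit_1: "Kimb_antidiag_unit (Suc 0) = {[(1,0)]}" by (auto simp: Kimb_antidiag_unit_def Kimb_antidiag_1)
lemma Kimb_unit_gf_1: "Kimb_unit_gf y (Suc 0) = 1" by (simp add: Kimb_unit_gf_def Kimb_antidiag_unit_1)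

lemma Kimb_gf_eq_fan_gf: "1 \<le> n \<Longrightarrow> Kimb_gf y n = fan_gf y n"
proof (rule eq_fan_gf_if_recursion[where g = "\<lambda>n. (1 - y) * Kimb_gf y n + y * Kimb_unit_gf y n"])
  show "Kimb_gf y (Suc 0) = 1" "(1 - y) * Kimb_gf y (Suc 0) + y * Kimb_unit_gf y (Suc 0) = 1"
    by (simp_all add: Kimb_gf_1 Kimb_unit_gf_1)
qed (simp_all add: Kimb_gf_Suc Kimb_unit_gf_Suc algebra_simps)

lemma Kimb_gf_coeffs:
  assumes "1 \<le> n"
  shows "Kimb_gf y n = (\<Sum>j\<le>n - 1. real (card (Kimb (n - j) j)) * y ^ j)"
proof -
  let ?height = "\<lambda>ps. sum_list (map snd (ps::(nat\<times>nat) list))"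
  have "?height ` Kimb_antidiag n \<subseteq> {..n-1}"
  proof (rule image_subsetI)
    fix ps assume ps: "ps \<in> Kimb_antidiag n"
    then obtain a b r where "ps = (a, b) # r" using Kimb_antidiag_Cons[OF _ assms] by blast
    then show "?height ps \<in> {..n-1}" using ps by (auto simp: Kimb_antidiag_def)
  qed
  then have "Kimb_gf y n = (\<Sum>j\<le>n-1. real (card {ps \<in> Kimb_antidiag n. ?height ps = j}) * y ^ j)"
    unfolding Kimb_gf_def by (rule sum_power_eq_card_coeffs[OF finite_Kimb_antidiag])
  also have "\<dots> = (\<Sum>j\<le>n - 1. real (card (Kimb (n - j) j)) * y ^ j)"
  proof (intro sum.cong refl)
    fix j assume "j \<in> {..n-1}"
    then have "{ps \<in> Kimb_antidiag n. ?height ps = j} = Kimb (n - j) j"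
      using assms by (auto simp: Kimb_antidiag_def Kimb_def)
    then show "real (card {ps \<in> Kimb_antidiag n. ?height ps = j}) * y ^ j = real (card (Kimb (n - j) j)) * y ^ j"
      by simp
  qed
  finally show ?thesis .
qed

section \<open>Subgraphs of the path\<close>

text \<open>Unlike in subgraphs_Pn the vertex set may be empty; this gives the base case
  subgraphs0 0 = {({}, {})}.\<close>

definition subgraphs0 :: "nat \<Rightarrow> (nat set \<times> nat set set) set" where
  "subgraphs0 n = {(V, E). V \<subseteq> {1..n} \<and> E \<subseteq> Pn_edges n \<and> (\<forall>e\<in>E. e \<subseteq> V)}"

definition subgraph_gf_top :: "real \<Rightarrow> nat \<Rightarrow> real" where
  "subgraph_gf_top y n = (\<Sum>(V,E)\<in>{(V,E)\<in>subgraphs0 n. n \<in> V}. y ^ card E)"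
definition subgraph_gf :: "real \<Rightarrow> nat \<Rightarrow> real" where
  "subgraph_gf y n = (\<Sum>(V,E)\<in>subgraphs0 n. y ^ card E)"

lemma Pn_edges_img: "Pn_edges n = (\<lambda>i. {i, i+1}) ` {1..<n}"
  by (auto simp: Pn_edges_def)

lemma finite_Pn_edges[simp]: "finite (Pn_edges n)"
  by (simp add: Pn_edges_img)

lemma card_Pn_edges_le: "card (Pn_edges n) \<le> n - 1"
  unfolding Pn_edges_img using card_image_le[of "{1..<n}" "\<lambda>i. {i, i+1}"] by simp

lemma Pn_edges_sub: "e \<in> Pn_edges n \<Longrightarrow> e \<subseteq> {1..n}"
  by (auto simp: Pn_edges_def)

lemma Pn_edges_Suc: "1 \<le> n \<Longrightarrow> Pn_edges (Suc n) = insert {n, Suc n} (Pn_edges n)"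
  by (auto simp: Pn_edges_def less_Suc_eq)

lemma Pn_edges_mono: "Pn_edges n \<subseteq> Pn_edges (Suc n)"
  by (auto simp: Pn_edges_def)

lemma new_edge_notin: "{n, Suc n} \<notin> Pn_edges n"
  using Pn_edges_sub by fastforce

lemma finite_subgraphs0: "finite (subgraphs0 n)"
proof -
  have "subgraphs0 n \<subseteq> Pow {1..n} \<times> Pow (Pn_edges n)" by (auto simp: subgraphs0_def)
  then show ?thesis by (rule finite_subset) simp
qed

lemma subgraphs0_0: "subgraphs0 0 = {({}, {})}"
  by (auto simp: subgraphs0_def Pn_edges_def)

lemma Pn_edges_Suc_cases: "e \<in> Pn_edges (Suc n) \<Longrightarrow> e \<in> Pn_edges n \<or> e = {n, Suc n}"
  by (auto simp: Pn_edges_def less_Suc_eq)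

lemma subgraphs0_Suc_without_top: "{(V,E)\<in>subgraphs0 (Suc n). Suc n \<notin> V} = subgraphs0 n"
proof (intro equalityI subsetI)
  fix x assume "x \<in> {(V,E)\<in>subgraphs0 (Suc n). Suc n \<notin> V}"
  then obtain V E where x: "x = (V,E)" "V \<subseteq> {1..Suc n}" "E \<subseteq> Pn_edges (Suc n)" "\<forall>e\<in>E. e \<subseteq> V" "Suc n \<notin> V"
    by (auto simp: subgraphs0_def)
  have "E \<subseteq> Pn_edges n"
  proof
    fix e assume "e \<in> E"
    then show "e \<in> Pn_edges n" using x Pn_edges_Suc_cases[of e n] by blast
  qed
  moreover have "V \<subseteq> {1..n}" using x by (auto simp: le_Suc_eq)
  ultimately show "x \<in> subgraphs0 n" using x by (auto simp: subgraphs0_def)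
next
  fix x assume "x \<in> subgraphs0 n"
  then show "x \<in> {(V,E)\<in>subgraphs0 (Suc n). Suc n \<notin> V}"
    using Pn_edges_mono[of n] by (auto simp: subgraphs0_def)
qed

lemma bij_subgraphs0_add_isolated_top: "bij_betw (\<lambda>(V,E). (insert (Suc n) V, E)) (subgraphs0 n)
                 {(V,E)\<in>subgraphs0 (Suc n). Suc n \<in> V \<and> {n, Suc n} \<notin> E}"
  apply (rule bij_betw_byWitness[where f' = "\<lambda>(V,E). (V - {Suc n}, E)"])
  subgoal by (auto simp: subgraphs0_def)
  subgoal by auto
  subgoal using Pn_edges_mono[of n] new_edge_notin[of n] by (auto simp: subgraphs0_def)
  subgoal
  proof (rule image_subsetI, clarify)
    fix V E assume h: "(V,E) \<in> subgraphs0 (Suc n)" "Suc n \<in> V" "{n, Suc n} \<notin> E"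
    have E: "E \<subseteq> Pn_edges n"
    proof
      fix e assume "e \<in> E"
      then show "e \<in> Pn_edges n" using h Pn_edges_Suc_cases[of e n] by (auto simp: subgraphs0_def)
    qed
    have "\<forall>e\<in>E. e \<subseteq> V - {Suc n}"
      using E h Pn_edges_sub by (fastforce simp: subgraphs0_def)
    then show "(V - {Suc n}, E) \<in> subgraphs0 n" using h E by (auto simp: subgraphs0_def le_Suc_eq)
  qed
  done

lemma bij_subgraphs0_add_top_edge: "bij_betw (\<lambda>(V,E). (insert (Suc n) V, insert {n, Suc n} E)) {(V,E)\<in>subgraphs0 n. n \<in> V}
                 {(V,E)\<in>subgraphs0 (Suc n). {n, Suc n} \<in> E}"
  apply (rule bij_betw_byWitness[where f' = "\<lambda>(V,E). (V - {Suc n}, E - {{n, Suc n}})"])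
  subgoal
  proof
    fix x assume "x \<in> {(V,E)\<in>subgraphs0 n. n \<in> V}"
    then obtain V E where x: "x = (V,E)" and h: "(V,E) \<in> subgraphs0 n" by auto
    then have "Suc n \<notin> V" "{n, Suc n} \<notin> E" using new_edge_notin[of n] by (auto simp: subgraphs0_def)
    then show "(\<lambda>(V,E). (V - {Suc n}, E - {{n, Suc n}})) ((\<lambda>(V,E). (insert (Suc n) V, insert {n, Suc n} E)) x) = x"
      using x by (simp add: Diff_insert_absorb)
  qed
  subgoal
  proof
    fix x assume "x \<in> {(V,E)\<in>subgraphs0 (Suc n). {n, Suc n} \<in> E}"
    then obtain V E where x: "x = (V,E)" and h: "(V,E) \<in> subgraphs0 (Suc n)" "{n, Suc n} \<in> E" by auto
    then have "Suc n \<in> V" by (auto simp: subgraphs0_def)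
    then show "(\<lambda>(V,E). (insert (Suc n) V, insert {n, Suc n} E)) ((\<lambda>(V,E). (V - {Suc n}, E - {{n, Suc n}})) x) = x"
      using x h by (simp add: insert_absorb)
  qed
  subgoal
  proof (rule image_subsetI)
    fix x assume "x \<in> {(V,E)\<in>subgraphs0 n. n \<in> V}"
    then obtain V E where x: "x = (V,E)" and h: "(V,E) \<in> subgraphs0 n" "n \<in> V" by auto
    then have "1 \<le> n" by (auto simp: subgraphs0_def)
    then have PE: "Pn_edges (Suc n) = insert {n, Suc n} (Pn_edges n)" by (rule Pn_edges_Suc)
    have "(insert (Suc n) V, insert {n, Suc n} E) \<in> {(V,E)\<in>subgraphs0 (Suc n). {n, Suc n} \<in> E}"
      using h unfolding subgraphs0_def PE by auto
    then show "(\<lambda>(V,E). (insert (Suc n) V, insert {n, Suc n} E)) x \<in> {(V,E)\<in>subgraphs0 (Suc n). {n, Suc n} \<in> E}"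
      using x by simp
  qed
  subgoal
  proof (rule image_subsetI)
    fix x assume "x \<in> {(V,E)\<in>subgraphs0 (Suc n). {n, Suc n} \<in> E}"
    then obtain V E where x: "x = (V,E)" and hV: "V \<subseteq> {1..Suc n}" and hE: "E \<subseteq> Pn_edges (Suc n)"
      and hc: "\<forall>e\<in>E. e \<subseteq> V" and he: "{n, Suc n} \<in> E" by (auto simp: subgraphs0_def)
    have E: "E - {{n, Suc n}} \<subseteq> Pn_edges n"
    proof
      fix e assume "e \<in> E - {{n, Suc n}}"
      then show "e \<in> Pn_edges n" using hE Pn_edges_Suc_cases[of e n] by blast
    qed
    have c: "\<forall>e\<in>E - {{n, Suc n}}. e \<subseteq> V - {Suc n}"
    proof
      fix e assume e: "e \<in> E - {{n, Suc n}}"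
      then have "e \<subseteq> {1..n}" using E Pn_edges_sub by blast
      moreover have "e \<subseteq> V" using e hc by blast
      ultimately show "e \<subseteq> V - {Suc n}" by auto
    qed
    have "n \<in> V" using he hc by blast
    moreover have "V - {Suc n} \<subseteq> {1..n}" using hV by (auto simp: le_Suc_eq)
    ultimately have "(V - {Suc n}, E - {{n, Suc n}}) \<in> {(V,E)\<in>subgraphs0 n. n \<in> V}"
      using c E by (simp add: subgraphs0_def)
    then show "(\<lambda>(V,E). (V - {Suc n}, E - {{n, Suc n}})) x \<in> {(V,E)\<in>subgraphs0 n. n \<in> V}"
      using x by simp
  qed
  done

lemma subgraphs0_Suc_with_top_split:
  "{(V,E)\<in>subgraphs0 (Suc n). Suc n \<in> V} = {(V,E)\<in>subgraphs0 (Suc n). Suc n \<in> V \<and> {n, Suc n} \<notin> E} \<union> {(V,E)\<in>subgraphs0 (Suc n). {n, Suc n} \<in> E}"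
  by (auto simp: subgraphs0_def)

lemma card_insert_edge: assumes "(V,E) \<in> subgraphs0 n" shows "card (insert {n, Suc n} E) = Suc (card E)"
proof -
  have E: "E \<subseteq> Pn_edges n" using assms by (auto simp: subgraphs0_def)
  then have "{n, Suc n} \<notin> E" using new_edge_notin[of n] by blast
  moreover have "finite E" using E by (rule finite_subset) simp
  ultimately show ?thesis by simp
qed

lemma subgraph_gf_top_Suc: "subgraph_gf_top y (Suc n) = subgraph_gf y n + y * subgraph_gf_top y n"
proof -
  let ?w = "\<lambda>(V::nat set, E::nat set set). y ^ card E"
  let ?S1 = "{(V,E)\<in>subgraphs0 (Suc n). Suc n \<in> V \<and> {n, Suc n} \<notin> E}"
  let ?S2 = "{(V,E)\<in>subgraphs0 (Suc n). {n, Suc n} \<in> E}"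
  have fin: "finite ?S1" "finite ?S2"
    by (auto intro: finite_subset[OF _ finite_subgraphs0[of "Suc n"]])
  have "subgraph_gf_top y (Suc n) = sum ?w (?S1 \<union> ?S2)"
    unfolding subgraph_gf_top_def subgraphs0_Suc_with_top_split by simp
  also have "\<dots> = sum ?w ?S1 + sum ?w ?S2"
    by (rule sum.union_disjoint) (use fin in auto)
  also have "sum ?w ?S1 = subgraph_gf y n"
  proof -
    have "sum ?w ?S1 = (\<Sum>x\<in>subgraphs0 n. ?w ((\<lambda>(V,E). (insert (Suc n) V, E)) x))"
      by (rule sum.reindex_bij_betw[OF bij_subgraphs0_add_isolated_top, symmetric])
    also have "\<dots> = (\<Sum>x\<in>subgraphs0 n. ?w x)"
      by (rule sum.cong) auto
    finally show ?thesis by (simp add: subgraph_gf_def)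
  qed
  also have "sum ?w ?S2 = y * subgraph_gf_top y n"
  proof -
    have "sum ?w ?S2 = (\<Sum>x\<in>{(V,E)\<in>subgraphs0 n. n \<in> V}. ?w ((\<lambda>(V,E). (insert (Suc n) V, insert {n, Suc n} E)) x))"
      by (rule sum.reindex_bij_betw[OF bij_subgraphs0_add_top_edge, symmetric])
    also have "\<dots> = (\<Sum>x\<in>{(V,E)\<in>subgraphs0 n. n \<in> V}. y * ?w x)"
      by (rule sum.cong) (auto simp: card_insert_edge)
    finally show ?thesis by (simp add: subgraph_gf_top_def sum_distrib_left)
  qed
  finally show ?thesis .
qed

lemma subgraph_gf_Suc: "subgraph_gf y (Suc n) = subgraph_gf y n + subgraph_gf_top y (Suc n)"
proof -
  let ?w = "\<lambda>(V::nat set, E::nat set set). y ^ card E"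
  have "subgraph_gf y (Suc n) = sum ?w {(V,E)\<in>subgraphs0 (Suc n). Suc n \<notin> V} + sum ?w {(V,E)\<in>subgraphs0 (Suc n). Suc n \<in> V}"
    unfolding subgraph_gf_def
    by (subst sum.union_disjoint[symmetric]) (auto intro: finite_subset[OF _ finite_subgraphs0] sum.cong)
  then show ?thesis unfolding subgraphs0_Suc_without_top subgraph_gf_def subgraph_gf_top_def by simp
qed

lemma subgraph_gf_top_0: "subgraph_gf_top y 0 = 0"
proof -
  have "{(V,E)\<in>subgraphs0 0. 0 \<in> V} = {}" by (auto simp: subgraphs0_0)
  then show ?thesis unfolding subgraph_gf_top_def by (metis sum.empty)
qed

lemma subgraph_gf_0: "subgraph_gf y 0 = 1"
  by (simp add: subgraph_gf_def subgraphs0_0)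

lemma subgraph_gf_eq_fan_gf: "subgraph_gf_top y n = fan_gf y n \<and> subgraph_gf y n = fan_gf y n + fan_gf_aux y n"
proof (induction n)
  case 0 then show ?case by (simp add: subgraph_gf_top_0 subgraph_gf_0)
next
  case (Suc n)
  then show ?case by (simp add: subgraph_gf_top_Suc subgraph_gf_Suc fan_gf_Suc fan_gf_aux_Suc algebra_simps)
qed

lemma subgraph_gf_top_coeffs:
  assumes "1 \<le> n"
  shows "subgraph_gf_top y n = (\<Sum>j\<le>n - 1. real (card {(V, E) \<in> subgraphs_Pn n. n \<in> V \<and> card E = j}) * y ^ j)"
proof -
  let ?S = "{(V,E)\<in>subgraphs0 n. n \<in> V}"
  have "card E \<le> n - 1" if "(V, E) \<in> ?S" for V E
    using that card_Pn_edges_le[of n] card_mono[of "Pn_edges n" E] by (auto simp: subgraphs0_def)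
  then have grade: "(\<lambda>x. card (snd x)) ` ?S \<subseteq> {..n-1}" by auto
  have fin: "finite ?S" by (rule finite_subset[OF _ finite_subgraphs0]) auto
  have "subgraph_gf_top y n = (\<Sum>x\<in>?S. y ^ card (snd x))"
    unfolding subgraph_gf_top_def by (rule sum.cong) auto
  also have "\<dots> = (\<Sum>j\<le>n-1. real (card {x \<in> ?S. card (snd x) = j}) * y ^ j)"
    by (rule sum_power_eq_card_coeffs[OF fin grade])
  also have "\<dots> = (\<Sum>j\<le>n - 1. real (card {(V, E) \<in> subgraphs_Pn n. n \<in> V \<and> card E = j}) * y ^ j)"
  proof (intro sum.cong refl)
    fix j
    have "{x \<in> ?S. card (snd x) = j} = {(V, E) \<in> subgraphs_Pn n. n \<in> V \<and> card E = j}"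
      by (auto simp: subgraphs0_def subgraphs_Pn_def)
    then show "real (card {x \<in> ?S. card (snd x) = j}) * y ^ j
             = real (card {(V, E) \<in> subgraphs_Pn n. n \<in> V \<and> card E = j}) * y ^ j" by simp
  qed
  finally show ?thesis .
qed

section \<open>Connected spanning subgraphs of the fan\<close>

definition adj :: "nat set set \<Rightarrow> (nat \<times> nat) set" where
  "adj A = {(x, y). {x, y} \<in> A}"

abbreviation reach :: "nat set set \<Rightarrow> nat \<Rightarrow> nat \<Rightarrow> bool" where
  "reach A u v \<equiv> (u, v) \<in> (adj A)\<^sup>*"

lemma adj_sym: "(x, y) \<in> adj A \<Longrightarrow> (y, x) \<in> adj A"
  by (auto simp: adj_def insert_commute)

lemma adj_conv: "(adj A)\<inverse> = adj A"
  using adj_sym by auto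

lemma reach_sym: "reach A u v \<Longrightarrow> reach A v u"
  by (metis adj_conv rtrancl_converseI)

lemma reach_trans: "reach A u v \<Longrightarrow> reach A v w \<Longrightarrow> reach A u w"
  by (rule rtrancl_trans)

lemma reach_mono: "A \<subseteq> B \<Longrightarrow> reach A u v \<Longrightarrow> reach B u v"
proof -
  assume "A \<subseteq> B"
  then have "adj A \<subseteq> adj B" by (auto simp: adj_def)
  then show "reach A u v \<Longrightarrow> reach B u v" using rtrancl_mono by blast
qed

lemma reach_edge: "{u, v} \<in> A \<Longrightarrow> reach A u v"
  by (auto simp: adj_def)

lemma reach_new_vertex_cases:
  assumes B: "\<forall>e\<in>B. w \<notin> e" and N: "w \<notin> N" and u: "u \<noteq> w"
    and r: "reach (B \<union> (\<lambda>a. {a, w}) ` N) u x"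
  shows "(x \<noteq> w \<longrightarrow> reach B u x \<or> (\<exists>a\<in>N. \<exists>b\<in>N. reach B u a \<and> reach B b x))
       \<and> (x = w \<longrightarrow> (\<exists>a\<in>N. reach B u a))"
  using r
proof (induction rule: rtrancl_induct)
  case base
  then show ?case using u by auto
next
  case (step x z)
  from step.hyps(2) have e: "{x, z} \<in> B \<union> (\<lambda>a. {a, w}) ` N" by (simp add: adj_def)
  show ?case
  proof (cases "{x, z} \<in> B")
    case True
    then have xz: "x \<noteq> w" "z \<noteq> w" using B by auto
    have st: "(x, z) \<in> adj B" using True by (simp add: adj_def)
    from step.IH xz have "reach B u x \<or> (\<exists>a\<in>N. \<exists>b\<in>N. reach B u a \<and> reach B b x)" by simp
    then show ?thesis using xz st
      by (meson rtrancl.rtrancl_into_rtrancl)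
  next
    case False
    with e obtain a where a: "a \<in> N" "{x, z} = {a, w}" by auto
    then have "a \<noteq> w" using N by auto
    from a(2) have "(x = a \<and> z = w) \<or> (x = w \<and> z = a)" by (auto simp: doubleton_eq_iff)
    then show ?thesis
    proof
      assume h: "x = a \<and> z = w"
      then have "x \<noteq> w" using \<open>a \<noteq> w\<close> by simp
      with step.IH have "reach B u x \<or> (\<exists>a\<in>N. \<exists>b\<in>N. reach B u a \<and> reach B b x)" by simp
      then show ?thesis using h a by auto
    next
      assume h: "x = w \<and> z = a"
      with step.IH obtain a' where "a' \<in> N" "reach B u a'" by auto
      then show ?thesis using h a \<open>a \<noteq> w\<close> by auto
    qed
  qed
qed

lemma reach_new_vertex:
  assumes B: "\<forall>e\<in>B. w \<notin> e" and N: "w \<notin> N" and u: "u \<noteq> w" and v: "v \<noteq> w"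
  shows "reach (B \<union> (\<lambda>a. {a, w}) ` N) u v \<longleftrightarrow>
           reach B u v \<or> (\<exists>a\<in>N. \<exists>b\<in>N. reach B u a \<and> reach B b v)"
proof
  assume "reach (B \<union> (\<lambda>a. {a, w}) ` N) u v"
  then show "reach B u v \<or> (\<exists>a\<in>N. \<exists>b\<in>N. reach B u a \<and> reach B b v)"
    using reach_new_vertex_cases[OF B N u] v by blast
next
  let ?A = "B \<union> (\<lambda>a. {a, w}) ` N"
  assume "reach B u v \<or> (\<exists>a\<in>N. \<exists>b\<in>N. reach B u a \<and> reach B b v)"
  then show "reach ?A u v"
  proof
    assume "reach B u v" then show ?thesis by (rule reach_mono[rotated]) auto
  next
    assume "\<exists>a\<in>N. \<exists>b\<in>N. reach B u a \<and> reach B b v"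
    then obtain a b where ab: "a \<in> N" "b \<in> N" "reach B u a" "reach B b v" by blast
    have "reach ?A u a" using ab(3) by (rule reach_mono[rotated]) auto
    moreover have "reach ?A a w" using ab(1) by (intro reach_edge) auto
    moreover have "reach ?A w b" using ab(2) by (intro reach_edge) (auto simp: insert_commute)
    moreover have "reach ?A b v" using ab(4) by (rule reach_mono[rotated]) auto
    ultimately show ?thesis by (meson reach_trans)
  qed
qed

lemma reach_new_vertex_to_new:
  assumes B: "\<forall>e\<in>B. w \<notin> e" and N: "w \<notin> N" and u: "u \<noteq> w"
  shows "reach (B \<union> (\<lambda>a. {a, w}) ` N) u w \<longleftrightarrow> (\<exists>a\<in>N. reach B u a)"
proof
  assume "reach (B \<union> (\<lambda>a. {a, w}) ` N) u w"
  then show "\<exists>a\<in>N. reach B u a"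
    using reach_new_vertex_cases[OF B N u] by blast
next
  let ?A = "B \<union> (\<lambda>a. {a, w}) ` N"
  assume "\<exists>a\<in>N. reach B u a"
  then obtain a where a: "a \<in> N" "reach B u a" by blast
  have "reach ?A u a" using a(2) by (rule reach_mono[rotated]) auto
  moreover have "reach ?A a w" using a(1) by (intro reach_edge) auto
  ultimately show "reach ?A u w" by (meson reach_trans)
qed

lemma ncomp_adj: "ncomp V A = card (V // {(u, v). u \<in> V \<and> v \<in> V \<and> (u, v) \<in> (adj A)\<^sup>*})"
  by (simp add: ncomp_def adj_def)

lemma ncomp_eq_1_if_reach_root:
  assumes "r \<in> V" "\<forall>v\<in>V. reach A v r"
  shows "ncomp V A = 1"
proof -
  let ?R = "{(u, v). u \<in> V \<and> v \<in> V \<and> (u, v) \<in> (adj A)\<^sup>*}"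
  have "?R `` {x} = V" if "x \<in> V" for x
  proof
    show "?R `` {x} \<subseteq> V" by auto
    show "V \<subseteq> ?R `` {x}"
    proof
      fix v assume v: "v \<in> V"
      have "reach A x r" using assms(2) that by blast
      moreover have "reach A r v" using assms(2) v reach_sym by blast
      ultimately show "v \<in> ?R `` {x}" using v that by (auto intro: reach_trans)
    qed
  qed
  then have "V // ?R = (\<Union>x\<in>V. {V})" unfolding quotient_def by (intro SUP_cong) auto
  also have "\<dots> = {V}" using assms(1) by blast
  finally show ?thesis unfolding ncomp_adj by simp
qed

lemma ncomp_ge_2_if_not_reach_root:
  assumes "finite V" "r \<in> V" "v \<in> V" "\<not> reach A v r"
  shows "2 \<le> ncomp V A"
proof -
  let ?R = "{(u, v). u \<in> V \<and> v \<in> V \<and> (u, v) \<in> (adj A)\<^sup>*}"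
  have fin: "finite (V // ?R)"
    by (rule finite_quotient[OF assms(1)]) auto
  have classes: "{?R `` {r}, ?R `` {v}} \<subseteq> V // ?R"
    using assms(2,3) by (auto simp: quotient_def)
  have "v \<notin> ?R `` {r}"
    using assms(4) reach_sym by blast
  moreover have "v \<in> ?R `` {v}" using assms(3) by auto
  ultimately have "?R `` {r} \<noteq> ?R `` {v}" by blast
  then have "card {?R `` {r}, ?R `` {v}} = 2" by simp
  moreover have "card {?R `` {r}, ?R `` {v}} \<le> card (V // ?R)" by (rule card_mono[OF fin classes])
  ultimately show ?thesis unfolding ncomp_adj by linarith
qed

lemma Fn_edges_sub: "e \<in> Fn_edges n \<Longrightarrow> e \<subseteq> {0..n}"
  by (auto simp: Fn_edges_def Pn_edges_def)

lemma finite_Fn_edges[simp]: "finite (Fn_edges n)"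
proof -
  have "{{0, i} | i. 1 \<le> i \<and> i \<le> n} = (\<lambda>i. {0, i}) ` {1..n}" by auto
  then show ?thesis by (simp add: Fn_edges_def)
qed

lemma Fn_edges_Suc: "1 \<le> n \<Longrightarrow> Fn_edges (Suc n) = Fn_edges n \<union> (\<lambda>a. {a, Suc n}) ` {0, n}"
  unfolding Fn_edges_def using Pn_edges_Suc[of n] by (auto simp: le_Suc_eq insert_commute)

lemma Fn_edges_new_notin: "e \<in> Fn_edges n \<Longrightarrow> Suc n \<notin> e"
  using Fn_edges_sub by fastforce

definition extend_edges :: "nat \<Rightarrow> nat set set \<Rightarrow> nat set \<Rightarrow> nat set set" where
  "extend_edges n A N = A \<union> (\<lambda>a. {a, Suc n}) ` N"

lemma new_edge_eq: "a \<noteq> w \<Longrightarrow> b \<noteq> w \<Longrightarrow> {a, w} = {b, w} \<longleftrightarrow> a = b"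
  by (auto simp: doubleton_eq_iff)

lemma new_edge_notin_Fn: "a \<le> n \<Longrightarrow> {a, Suc n} \<notin> Fn_edges n"
  using Fn_edges_new_notin by blast

lemma extend_edges_parts:
  assumes "A \<subseteq> Fn_edges n" "N \<subseteq> {0..n}"
  shows "extend_edges n A N \<inter> Fn_edges n = A" "{a \<in> {0..n}. {a, Suc n} \<in> extend_edges n A N} = N"
proof -
  show "extend_edges n A N \<inter> Fn_edges n = A"
    using assms new_edge_notin_Fn by (auto simp: extend_edges_def)
  show "{a \<in> {0..n}. {a, Suc n} \<in> extend_edges n A N} = N"
  proof (intro equalityI subsetI)
    fix a assume a: "a \<in> {a \<in> {0..n}. {a, Suc n} \<in> extend_edges n A N}"
    then have "{a, Suc n} \<notin> A" using assms new_edge_notin_Fn by auto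
    with a obtain b where "b \<in> N" "{a, Suc n} = {b, Suc n}" by (auto simp: extend_edges_def)
    moreover have "b \<noteq> Suc n" using \<open>b \<in> N\<close> assms by auto
    ultimately show "a \<in> N" using a new_edge_eq[of a "Suc n" b] by auto
  next
    fix a assume "a \<in> N" then show "a \<in> {a \<in> {0..n}. {a, Suc n} \<in> extend_edges n A N}"
      using assms by (auto simp: extend_edges_def)
  qed
qed

lemma extend_edges_inj:
  assumes "A \<subseteq> Fn_edges n" "N \<subseteq> {0..n}" "B \<subseteq> Fn_edges n" "M \<subseteq> {0..n}" "extend_edges n A N = extend_edges n B M"
  shows "A = B \<and> N = M"
  using extend_edges_parts[OF assms(1,2)] extend_edges_parts[OF assms(3,4)] assms(5) by metis

lemma card_extend_edges:
  assumes "A \<subseteq> Fn_edges n" "N \<subseteq> {0..n}"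
  shows "card (extend_edges n A N) = card A + card N"
proof -
  have fA: "finite A" using assms(1) by (rule finite_subset) simp
  have fN: "finite N" using assms(2) by (rule finite_subset) simp
  have inj: "inj_on (\<lambda>a. {a, Suc n}) N"
    using assms(2) by (intro inj_onI) (auto simp: doubleton_eq_iff)
  have disj: "A \<inter> (\<lambda>a. {a, Suc n}) ` N = {}"
  proof -
    have "{a, Suc n} \<notin> A" if "a \<in> N" for a
    proof -
      have "a \<le> n" using that assms(2) by auto
      then have "{a, Suc n} \<notin> Fn_edges n" by (rule new_edge_notin_Fn)
      then show ?thesis using assms(1) by blast
    qed
    then show ?thesis by auto
  qed
  have "card (extend_edges n A N) = card A + card ((\<lambda>a. {a, Suc n}) ` N)"
    unfolding extend_edges_def by (rule card_Un_disjoint) (use fA fN disj in auto)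
  also have "\<dots> = card A + card N" using card_image[OF inj] by simp
  finally show ?thesis .
qed

lemma extend_edges_decomp:
  assumes "1 \<le> n" "A \<subseteq> Fn_edges (Suc n)"
  shows "A = extend_edges n (A \<inter> Fn_edges n) {a \<in> {0, n}. {a, Suc n} \<in> A}"
  using assms Fn_edges_Suc[OF assms(1)] by (auto simp: extend_edges_def)

definition connected_edges :: "nat \<Rightarrow> nat set set set" where
  "connected_edges n = {A. A \<subseteq> Fn_edges n \<and> (\<forall>v\<in>{0..n}. reach A v 0)}"

definition split_edges :: "nat \<Rightarrow> nat set set set" where
  "split_edges n = {A. A \<subseteq> Fn_edges n \<and> (\<forall>v\<in>{0..n}. reach A v 0 \<or> reach A v n) \<and> \<not> reach A n 0}"

context
  fixes n :: nat and A :: "nat set set" and N :: "nat set"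
  assumes n1: "1 \<le> n" and A: "A \<subseteq> Fn_edges n" and N: "N \<subseteq> {0, n}"
begin

private lemma edges_avoid_new: "\<forall>e\<in>A. Suc n \<notin> e" using A Fn_edges_new_notin by blast
private lemma new_notin_attach: "Suc n \<notin> N" using N by auto

private lemma reach_extend_edges_old: "u \<le> n \<Longrightarrow> v \<le> n \<Longrightarrow>
   reach (extend_edges n A N) u v \<longleftrightarrow> reach A u v \<or> (\<exists>a\<in>N. \<exists>b\<in>N. reach A u a \<and> reach A b v)"
  unfolding extend_edges_def by (rule reach_new_vertex[OF edges_avoid_new new_notin_attach]) auto

private lemma reach_extend_edges_new: "u \<le> n \<Longrightarrow> reach (extend_edges n A N) u (Suc n) \<longleftrightarrow> (\<exists>a\<in>N. reach A u a)"
  unfolding extend_edges_def by (rule reach_new_vertex_to_new[OF edges_avoid_new new_notin_attach]) auto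

private lemma reach_extend_edges_new_sink: "reach (extend_edges n A N) (Suc n) 0 \<longleftrightarrow> (\<exists>a\<in>N. reach A 0 a)"
  using reach_extend_edges_new[of 0] reach_sym by blast

private lemma extend_edges_subset: "extend_edges n A N \<subseteq> Fn_edges (Suc n)"
  using A N Fn_edges_Suc[OF n1] by (auto simp: extend_edges_def)

lemma connected_extend_connected: "A \<in> connected_edges n \<Longrightarrow> N \<noteq> {} \<Longrightarrow> extend_edges n A N \<in> connected_edges (Suc n)"
proof -
  assume X: "A \<in> connected_edges n" and Ne: "N \<noteq> {}"
  have all: "reach A v 0" if "v \<le> n" for v using X that by (auto simp: connected_edges_def)
  have "reach (extend_edges n A N) v 0" if v: "v \<le> Suc n" for v
  proof (cases "v = Suc n")
    case True
    obtain a where a: "a \<in> N" using Ne by auto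
    then have "a \<le> n" using N by auto
    then have "reach A 0 a" using all reach_sym by blast
    then show ?thesis using True reach_extend_edges_new_sink a by blast
  next
    case False
    then have "v \<le> n" using v by auto
    then show ?thesis using reach_extend_edges_old[of v 0] all by auto
  qed
  then show ?thesis using extend_edges_subset by (auto simp: connected_edges_def)
qed

lemma connected_extend_split: "A \<in> split_edges n \<Longrightarrow> N = {0, n} \<Longrightarrow> extend_edges n A N \<in> connected_edges (Suc n)"
proof -
  assume Y: "A \<in> split_edges n" and NN: "N = {0, n}"
  have n0: "reach (extend_edges n A N) n 0" using reach_extend_edges_old[of n 0] NN by auto
  have "reach (extend_edges n A N) v 0" if v: "v \<le> Suc n" for v
  proof (cases "v = Suc n")
    case True
    then show ?thesis using reach_extend_edges_new_sink NN by auto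
  next
    case False
    then have vn: "v \<le> n" using v by auto
    then have "reach A v 0 \<or> reach A v n" using Y by (auto simp: split_edges_def)
    then show ?thesis
    proof
      assume "reach A v 0" then show ?thesis using reach_extend_edges_old[of v 0] vn by auto
    next
      assume "reach A v n"
      then have "reach (extend_edges n A N) v n" using reach_extend_edges_old[of v n] vn by auto
      then show ?thesis using n0 by (rule reach_trans)
    qed
  qed
  then show ?thesis using extend_edges_subset by (auto simp: connected_edges_def)
qed

lemma split_extend_connected: "A \<in> connected_edges n \<Longrightarrow> N = {} \<Longrightarrow> extend_edges n A N \<in> split_edges (Suc n)"
proof -
  assume X: "A \<in> connected_edges n" and NN: "N = {}"
  have "reach (extend_edges n A N) v 0 \<or> reach (extend_edges n A N) v (Suc n)" if v: "v \<le> Suc n" for v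
  proof (cases "v = Suc n")
    case True then show ?thesis by auto
  next
    case False
    then have "v \<le> n" using v by auto
    then show ?thesis using reach_extend_edges_old[of v 0] X by (auto simp: connected_edges_def)
  qed
  moreover have "\<not> reach (extend_edges n A N) (Suc n) 0" using reach_extend_edges_new_sink NN by auto
  ultimately show ?thesis using extend_edges_subset by (auto simp: split_edges_def)
qed

lemma split_extend_split: "A \<in> split_edges n \<Longrightarrow> N = {n} \<Longrightarrow> extend_edges n A N \<in> split_edges (Suc n)"
proof -
  assume Y: "A \<in> split_edges n" and NN: "N = {n}"
  have "reach (extend_edges n A N) v 0 \<or> reach (extend_edges n A N) v (Suc n)" if v: "v \<le> Suc n" for v
  proof (cases "v = Suc n")
    case True then show ?thesis by auto
  next
    case False
    then have vn: "v \<le> n" using v by auto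
    then have "reach A v 0 \<or> reach A v n" using Y by (auto simp: split_edges_def)
    then show ?thesis using reach_extend_edges_old[of v 0] reach_extend_edges_new[of v] vn NN by auto
  qed
  moreover have "\<not> reach (extend_edges n A N) (Suc n) 0"
  proof
    assume "reach (extend_edges n A N) (Suc n) 0"
    then have "reach A 0 n" using reach_extend_edges_new_sink NN by auto
    then have "reach A n 0" by (rule reach_sym)
    with Y show False by (auto simp: split_edges_def)
  qed
  ultimately show ?thesis using extend_edges_subset by (auto simp: split_edges_def)
qed

lemma connected_extend_cases: "extend_edges n A N \<in> connected_edges (Suc n) \<Longrightarrow> (A \<in> connected_edges n \<and> N \<noteq> {}) \<or> (A \<in> split_edges n \<and> N = {0, n})"
proof -
  assume X: "extend_edges n A N \<in> connected_edges (Suc n)"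
  have Rv: "reach (extend_edges n A N) v 0" if "v \<le> Suc n" for v using X that by (auto simp: connected_edges_def)
  have "\<exists>a\<in>N. reach A 0 a" using Rv[of "Suc n"] reach_extend_edges_new_sink by auto
  then have Ne: "N \<noteq> {}" by auto
  show ?thesis
  proof (cases "\<forall>v\<in>{0..n}. reach A v 0")
    case True
    then show ?thesis using A Ne by (auto simp: connected_edges_def)
  next
    case False
    then obtain v0 where v0: "v0 \<le> n" "\<not> reach A v0 0" by auto
    have ex0: "\<exists>a\<in>N. \<exists>b\<in>N. reach A v0 a \<and> reach A b 0" using Rv[of v0] reach_extend_edges_old[of v0 0] v0 by auto
    then obtain a b where ab: "a \<in> N" "b \<in> N" "reach A v0 a" "reach A b 0" by blast
    have "a \<noteq> 0"
    proof
      assume "a = 0" with ab(3) v0(2) show False by simp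
    qed
    then have an: "a = n" using ab N by auto
    have nn0: "\<not> reach A n 0"
    proof
      assume "reach A n 0" then have "reach A v0 0" using ab(3) an by (metis reach_trans)
      with v0 show False by simp
    qed
    then have "b \<noteq> n" using ab by auto
    then have "b = 0" using ab N by auto
    then have NN: "N = {0, n}" using N ab an by auto
    have "reach A v 0 \<or> reach A v n" if v: "v \<le> n" for v
    proof -
      have "reach (extend_edges n A N) v 0" using Rv v by auto
      then have "reach A v 0 \<or> (\<exists>a\<in>N. \<exists>b\<in>N. reach A v a \<and> reach A b 0)" using reach_extend_edges_old[of v 0] v by auto
      then show ?thesis using NN by auto
    qed
    then have "A \<in> split_edges n" using A nn0 by (auto simp: split_edges_def)
    then show ?thesis using NN by auto
  qed
qed

lemma split_extend_cases: "extend_edges n A N \<in> split_edges (Suc n) \<Longrightarrow> (A \<in> connected_edges n \<and> N = {}) \<or> (A \<in> split_edges n \<and> N = {n})"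
proof -
  assume Y: "extend_edges n A N \<in> split_edges (Suc n)"
  have Rv: "reach (extend_edges n A N) v 0 \<or> reach (extend_edges n A N) v (Suc n)" if "v \<le> Suc n" for v
    using Y that by (auto simp: split_edges_def)
  have nw: "\<not> reach (extend_edges n A N) (Suc n) 0" using Y by (auto simp: split_edges_def)
  then have "\<not> (\<exists>a\<in>N. reach A 0 a)" using reach_extend_edges_new_sink by simp
  then have n0: "0 \<notin> N" by auto
  show ?thesis
  proof (cases "n \<in> N")
    case False
    then have NN: "N = {}" using N n0 by auto
    have "reach A v 0" if v: "v \<le> n" for v
    proof -
      have "\<not> reach (extend_edges n A N) v (Suc n)" using reach_extend_edges_new[of v] v NN by auto
      then have "reach (extend_edges n A N) v 0" using Rv[of v] v by auto
      then show ?thesis using reach_extend_edges_old[of v 0] v NN by auto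
    qed
    then show ?thesis using A NN by (auto simp: connected_edges_def)
  next
    case True
    then have NN: "N = {n}" using N n0 by auto
    have nn0: "\<not> reach A n 0"
    proof
      assume "reach A n 0"
      then have "reach A 0 n" by (rule reach_sym)
      then show False using \<open>\<not> (\<exists>a\<in>N. reach A 0 a)\<close> NN by auto
    qed
    have "reach A v 0 \<or> reach A v n" if v: "v \<le> n" for v
    proof -
      have "reach (extend_edges n A N) v 0 \<or> reach (extend_edges n A N) v (Suc n)" using Rv[of v] v by auto
      then show ?thesis
      proof
        assume "reach (extend_edges n A N) v 0"
        then have "reach A v 0 \<or> (reach A v n \<and> reach A n 0)" using reach_extend_edges_old[of v 0] v NN by auto
        then show ?thesis by auto
      next
        assume "reach (extend_edges n A N) v (Suc n)"
        then show ?thesis using reach_extend_edges_new[of v] v NN by auto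
      qed
    qed
    then have "A \<in> split_edges n" using A nn0 by (auto simp: split_edges_def)
    then show ?thesis using NN by auto
  qed
qed

end

lemma subsets_of_0n: "N \<subseteq> {0, n} \<Longrightarrow> N = {} \<or> N = {0} \<or> N = {n} \<or> N = {0, n}"
  by auto

lemma connected_edges_subset: "A \<in> connected_edges n \<Longrightarrow> A \<subseteq> Fn_edges n" by (simp add: connected_edges_def)
lemma split_edges_subset: "A \<in> split_edges n \<Longrightarrow> A \<subseteq> Fn_edges n" by (simp add: split_edges_def)

lemma connected_split_edges_disjoint: "connected_edges n \<inter> split_edges n = {}"
proof -
  have "A \<in> connected_edges n \<Longrightarrow> A \<in> split_edges n \<Longrightarrow> False" for A
    by (auto simp: connected_edges_def split_edges_def)
  then show ?thesis by blast
qed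

lemma subset_0n_atLeastAtMost: "1 \<le> (n::nat) \<Longrightarrow> N \<subseteq> {0, n} \<Longrightarrow> N \<subseteq> {0..n}"
  by (rule subset_trans) auto

lemma connected_edges_Suc:
  assumes n1: "1 \<le> n"
  shows "connected_edges (Suc n) = (\<lambda>A. extend_edges n A {0}) ` connected_edges n \<union> (\<lambda>A. extend_edges n A {n}) ` connected_edges n
                    \<union> (\<lambda>A. extend_edges n A {0, n}) ` connected_edges n \<union> (\<lambda>A. extend_edges n A {0, n}) ` split_edges n"
proof (intro equalityI subsetI)
  fix A assume A: "A \<in> connected_edges (Suc n)"
  let ?A' = "A \<inter> Fn_edges n" and ?N = "{a \<in> {0, n}. {a, Suc n} \<in> A}"
  have eq: "A = extend_edges n ?A' ?N" by (rule extend_edges_decomp[OF n1 connected_edges_subset[OF A]])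
  have s1: "?A' \<subseteq> Fn_edges n" by auto
  have s2: "?N \<subseteq> {0, n}" by auto
  have "extend_edges n ?A' ?N \<in> connected_edges (Suc n)" using A eq by simp
  from connected_extend_cases[OF n1 s1 s2 this] subsets_of_0n[OF s2]
  have "(?A' \<in> connected_edges n \<and> ?N = {0}) \<or> (?A' \<in> connected_edges n \<and> ?N = {n}) \<or> (?A' \<in> connected_edges n \<and> ?N = {0, n})
        \<or> (?A' \<in> split_edges n \<and> ?N = {0, n})" by blast
  then show "A \<in> (\<lambda>A. extend_edges n A {0}) ` connected_edges n \<union> (\<lambda>A. extend_edges n A {n}) ` connected_edges n
                    \<union> (\<lambda>A. extend_edges n A {0, n}) ` connected_edges n \<union> (\<lambda>A. extend_edges n A {0, n}) ` split_edges n"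
    by (elim disjE conjE) (metis (no_types, lifting) UnI1 UnI2 eq image_eqI)+
next
  fix A assume "A \<in> (\<lambda>A. extend_edges n A {0}) ` connected_edges n \<union> (\<lambda>A. extend_edges n A {n}) ` connected_edges n
                    \<union> (\<lambda>A. extend_edges n A {0, n}) ` connected_edges n \<union> (\<lambda>A. extend_edges n A {0, n}) ` split_edges n"
  then show "A \<in> connected_edges (Suc n)"
    using connected_extend_connected[OF n1 connected_edges_subset, of _ "{0}"] connected_extend_connected[OF n1 connected_edges_subset, of _ "{n}"] connected_extend_connected[OF n1 connected_edges_subset, of _ "{0,n}"]
      connected_extend_split[OF n1 split_edges_subset, of _ "{0,n}"]
    by auto
qed

lemma split_edges_Suc:
  assumes n1: "1 \<le> n"
  shows "split_edges (Suc n) = (\<lambda>A. extend_edges n A {}) ` connected_edges n \<union> (\<lambda>A. extend_edges n A {n}) ` split_edges n"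
proof (intro equalityI subsetI)
  fix A assume A: "A \<in> split_edges (Suc n)"
  let ?A' = "A \<inter> Fn_edges n" and ?N = "{a \<in> {0, n}. {a, Suc n} \<in> A}"
  have eq: "A = extend_edges n ?A' ?N" by (rule extend_edges_decomp[OF n1 split_edges_subset[OF A]])
  have s1: "?A' \<subseteq> Fn_edges n" by auto
  have s2: "?N \<subseteq> {0, n}" by auto
  have "extend_edges n ?A' ?N \<in> split_edges (Suc n)" using A eq by simp
  from split_extend_cases[OF n1 s1 s2 this]
  show "A \<in> (\<lambda>A. extend_edges n A {}) ` connected_edges n \<union> (\<lambda>A. extend_edges n A {n}) ` split_edges n"
    by (elim disjE conjE) (metis (no_types, lifting) UnI1 UnI2 eq image_eqI)+
next
  fix A assume "A \<in> (\<lambda>A. extend_edges n A {}) ` connected_edges n \<union> (\<lambda>A. extend_edges n A {n}) ` split_edges n"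
  then show "A \<in> split_edges (Suc n)"
    using split_extend_connected[OF n1 connected_edges_subset, of _ "{}"] split_extend_split[OF n1 split_edges_subset, of _ "{n}"]
    by auto
qed

lemma finite_connected_edges: "finite (connected_edges n)"
  by (rule finite_subset[of _ "Pow (Fn_edges n)"]) (auto simp: connected_edges_def)
lemma finite_split_edges: "finite (split_edges n)"
  by (rule finite_subset[of _ "Pow (Fn_edges n)"]) (auto simp: split_edges_def)

lemma inj_on_extend_edges:
  assumes "1 \<le> n" "N \<subseteq> {0, n}" "S \<subseteq> Pow (Fn_edges n)"
  shows "inj_on (\<lambda>A. extend_edges n A N) S"
proof (rule inj_onI)
  fix A B assume "A \<in> S" "B \<in> S" "extend_edges n A N = extend_edges n B N"
  then show "A = B" using extend_edges_inj[of A n N B N] assms subset_0n_atLeastAtMost[OF assms(1,2)] by auto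
qed

lemma extend_edges_disjoint:
  assumes "1 \<le> n" "N \<subseteq> {0, n}" "M \<subseteq> {0, n}" "N \<noteq> M" "S \<subseteq> Pow (Fn_edges n)" "T \<subseteq> Pow (Fn_edges n)"
  shows "(\<lambda>A. extend_edges n A N) ` S \<inter> (\<lambda>A. extend_edges n A M) ` T = {}"
proof -
  have "extend_edges n A N \<noteq> extend_edges n B M" if "A \<in> S" "B \<in> T" for A B
  proof
    assume e: "extend_edges n A N = extend_edges n B M"
    have "A \<subseteq> Fn_edges n" "B \<subseteq> Fn_edges n" using assms that by auto
    then have "N = M" using extend_edges_inj[OF _ subset_0n_atLeastAtMost[OF assms(1,2)] _ subset_0n_atLeastAtMost[OF assms(1,3)] e] by blast
    with assms(4) show False by simp
  qed
  then show ?thesis by blast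
qed

lemma extend_edges_disjoint_connected_split:
  assumes "1 \<le> n" "N \<subseteq> {0, n}"
  shows "(\<lambda>A. extend_edges n A N) ` connected_edges n \<inter> (\<lambda>A. extend_edges n A N) ` split_edges n = {}"
proof -
  have "extend_edges n A N \<noteq> extend_edges n B N" if "A \<in> connected_edges n" "B \<in> split_edges n" for A B
  proof
    assume "extend_edges n A N = extend_edges n B N"
    then have "A = B" using extend_edges_inj[of A n N B N] assms that connected_edges_subset split_edges_subset subset_0n_atLeastAtMost[OF assms(1,2)] by auto
    then show False using that connected_split_edges_disjoint by auto
  qed
  then show ?thesis by blast
qed

lemma card_connected_split_edges_ge: "1 \<le> n \<Longrightarrow> (\<forall>A\<in>connected_edges n. n \<le> card A) \<and> (\<forall>A\<in>split_edges n. n \<le> card A + 1)"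
proof (induction n rule: dec_induct)
  case base
  have "A \<in> connected_edges 1 \<Longrightarrow> 1 \<le> card A" for A
  proof -
    assume A: "A \<in> connected_edges 1"
    then have "reach A 1 0" by (auto simp: connected_edges_def)
    then have "A \<noteq> {}" by (auto simp: adj_def)
    moreover have "finite A" using A finite_Fn_edges[of 1] by (auto simp: connected_edges_def intro: finite_subset)
    ultimately show ?thesis by (simp add: Suc_le_eq card_gt_0_iff)
  qed
  then show ?case by auto
next
  case (step m)
  have m1: "1 \<le> m" using step by simp
  have sN: "{0} \<subseteq> {0..m}" "{m} \<subseteq> {0..m}" "{0, m} \<subseteq> {0..m}" "{} \<subseteq> {0..m}" by auto
  have c2: "card {0, m} = 2" using m1 by simp
  have X: "\<forall>A\<in>connected_edges (Suc m). Suc m \<le> card A"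
    unfolding connected_edges_Suc[OF m1]
    using step.IH card_extend_edges[OF connected_edges_subset sN(1)] card_extend_edges[OF connected_edges_subset sN(2)] card_extend_edges[OF connected_edges_subset sN(3)]
      card_extend_edges[OF split_edges_subset sN(3)] c2 by fastforce
  have Y: "\<forall>A\<in>split_edges (Suc m). Suc m \<le> card A + 1"
    unfolding split_edges_Suc[OF m1]
    using step.IH card_extend_edges[OF connected_edges_subset sN(4)] card_extend_edges[OF split_edges_subset sN(2)] by fastforce
  from X Y show ?case by simp
qed

text \<open>The exponents are the nullities: connected spanning subgraphs of F_n have rank n, and those in
  split_edges n have rank n - 1.\<close>

definition connected_gf :: "real \<Rightarrow> nat \<Rightarrow> real" where
  "connected_gf y n = (\<Sum>A\<in>connected_edges n. (y - 1) ^ (card A - n))"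
definition split_gf :: "real \<Rightarrow> nat \<Rightarrow> real" where
  "split_gf y n = (\<Sum>A\<in>split_edges n. (y - 1) ^ (card A + 1 - n))"

lemma sum_image_extend_edges:
  assumes n1: "1 \<le> n" and N: "N \<subseteq> {0, n}" and S: "S \<subseteq> Pow (Fn_edges n)"
  shows "(\<Sum>A\<in>(\<lambda>A. extend_edges n A N) ` S. f (card A)) = (\<Sum>A\<in>S. f (card A + card N))"
proof -
  have "(\<Sum>A\<in>(\<lambda>A. extend_edges n A N) ` S. f (card A)) = (\<Sum>A\<in>S. f (card (extend_edges n A N)))"
    by (subst sum.reindex[OF inj_on_extend_edges[OF n1 N S]]) simp
  also have "\<dots> = (\<Sum>A\<in>S. f (card A + card N))"
    by (rule sum.cong) (use S subset_0n_atLeastAtMost[OF n1 N] card_extend_edges in auto)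
  finally show ?thesis .
qed

lemma connected_edges_Pow: "connected_edges n \<subseteq> Pow (Fn_edges n)" and split_edges_Pow: "split_edges n \<subseteq> Pow (Fn_edges n)"
  by (auto simp: connected_edges_def split_edges_def)

lemma connected_gf_Suc:
  assumes n1: "1 \<le> n"
  shows "connected_gf y (Suc n) = (1 + y) * connected_gf y n + split_gf y n"
proof -
  let ?f = "\<lambda>k. (y - 1) ^ (k - Suc n)"
  let ?S1 = "(\<lambda>A. extend_edges n A {0}) ` connected_edges n" and ?S2 = "(\<lambda>A. extend_edges n A {n}) ` connected_edges n"
  let ?S3 = "(\<lambda>A. extend_edges n A {0, n}) ` connected_edges n" and ?S4 = "(\<lambda>A. extend_edges n A {0, n}) ` split_edges n"
  have s: "{0} \<subseteq> {0, n}" "{n} \<subseteq> {0, n}" "{0, n} \<subseteq> {0, (n::nat)}" by auto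
  have d12: "?S1 \<inter> ?S2 = {}" using n1 by (intro extend_edges_disjoint[OF n1 s(1) s(2) _ connected_edges_Pow connected_edges_Pow]) auto
  have d13: "?S1 \<inter> ?S3 = {}" using n1 by (intro extend_edges_disjoint[OF n1 s(1) s(3) _ connected_edges_Pow connected_edges_Pow]) auto
  have d14: "?S1 \<inter> ?S4 = {}" using n1 by (intro extend_edges_disjoint[OF n1 s(1) s(3) _ connected_edges_Pow split_edges_Pow]) auto
  have d23: "?S2 \<inter> ?S3 = {}" using n1 by (intro extend_edges_disjoint[OF n1 s(2) s(3) _ connected_edges_Pow connected_edges_Pow]) auto
  have d24: "?S2 \<inter> ?S4 = {}" using n1 by (intro extend_edges_disjoint[OF n1 s(2) s(3) _ connected_edges_Pow split_edges_Pow]) auto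
  have d34: "?S3 \<inter> ?S4 = {}" by (rule extend_edges_disjoint_connected_split[OF n1 s(3)])
  have fin: "finite ?S1" "finite ?S2" "finite ?S3" "finite ?S4"
    using finite_connected_edges finite_split_edges by auto
  have "connected_gf y (Suc n) = (\<Sum>A\<in>?S1 \<union> ?S2 \<union> ?S3 \<union> ?S4. ?f (card A))"
    unfolding connected_gf_def connected_edges_Suc[OF n1] by simp
  also have "\<dots> = (\<Sum>A\<in>?S1. ?f (card A)) + (\<Sum>A\<in>?S2. ?f (card A)) + (\<Sum>A\<in>?S3. ?f (card A)) + (\<Sum>A\<in>?S4. ?f (card A))"
    using fin d12 d13 d14 d23 d24 d34
    by (simp add: sum.union_disjoint Int_Un_distrib2)
  also have "(\<Sum>A\<in>?S1. ?f (card A)) = connected_gf y n"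
    unfolding sum_image_extend_edges[OF n1 s(1) connected_edges_Pow, of ?f] connected_gf_def by simp
  also have "(\<Sum>A\<in>?S2. ?f (card A)) = connected_gf y n"
    unfolding sum_image_extend_edges[OF n1 s(2) connected_edges_Pow, of ?f] connected_gf_def by simp
  also have "(\<Sum>A\<in>?S3. ?f (card A)) = (y - 1) * connected_gf y n"
  proof -
    have "(\<Sum>A\<in>?S3. ?f (card A)) = (\<Sum>A\<in>connected_edges n. ?f (card A + card {0, n}))"
      by (rule sum_image_extend_edges[OF n1 s(3) connected_edges_Pow])
    also have "\<dots> = (\<Sum>A\<in>connected_edges n. (y - 1) * (y - 1) ^ (card A - n))"
    proof (rule sum.cong[OF refl])
      fix A assume "A \<in> connected_edges n"
      then have "n \<le> card A" using card_connected_split_edges_ge[OF n1] by auto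
      moreover have "card {0, n} = 2" using n1 by simp
      ultimately have "card A + card {0, n} - Suc n = Suc (card A - n)" by simp
      then show "?f (card A + card {0, n}) = (y - 1) * (y - 1) ^ (card A - n)" by simp
    qed
    finally show ?thesis by (simp add: connected_gf_def sum_distrib_left)
  qed
  also have "(\<Sum>A\<in>?S4. ?f (card A)) = split_gf y n"
  proof -
    have "(\<Sum>A\<in>?S4. ?f (card A)) = (\<Sum>A\<in>split_edges n. ?f (card A + card {0, n}))"
      by (rule sum_image_extend_edges[OF n1 s(3) split_edges_Pow])
    also have "\<dots> = split_gf y n" unfolding split_gf_def using n1 by (intro sum.cong) auto
    finally show ?thesis .
  qed
  finally show ?thesis by (simp add: algebra_simps)
qed

lemma split_gf_Suc:
  assumes n1: "1 \<le> n"
  shows "split_gf y (Suc n) = connected_gf y n + split_gf y n"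
proof -
  let ?f = "\<lambda>k. (y - 1) ^ (k + 1 - Suc n)"
  let ?S1 = "(\<lambda>A. extend_edges n A {}) ` connected_edges n" and ?S2 = "(\<lambda>A. extend_edges n A {n}) ` split_edges n"
  have s: "{} \<subseteq> {0, n}" "{n} \<subseteq> {0, (n::nat)}" by auto
  have d12: "?S1 \<inter> ?S2 = {}" by (intro extend_edges_disjoint[OF n1 s(1) s(2) _ connected_edges_Pow split_edges_Pow]) auto
  have "split_gf y (Suc n) = (\<Sum>A\<in>?S1 \<union> ?S2. ?f (card A))"
    unfolding split_gf_def split_edges_Suc[OF n1] by simp
  also have "\<dots> = (\<Sum>A\<in>?S1. ?f (card A)) + (\<Sum>A\<in>?S2. ?f (card A))"
    using finite_connected_edges finite_split_edges d12 by (simp add: sum.union_disjoint)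
  also have "(\<Sum>A\<in>?S1. ?f (card A)) = connected_gf y n"
    unfolding sum_image_extend_edges[OF n1 s(1) connected_edges_Pow, of ?f] connected_gf_def by simp
  also have "(\<Sum>A\<in>?S2. ?f (card A)) = split_gf y n"
    unfolding sum_image_extend_edges[OF n1 s(2) split_edges_Pow, of ?f] split_gf_def by simp
  finally show ?thesis .
qed

lemma Fn_edges_1: "Fn_edges (Suc 0) = {{0, 1}}"
  by (auto simp: Fn_edges_def Pn_edges_def)

lemma reach_empty: "reach {} u v \<longleftrightarrow> u = v"
  by (simp add: adj_def)

lemma connected_edges_1: "connected_edges (Suc 0) = {{{0, 1}}}"
proof -
  have P: "Pow {{0, 1::nat}} = {{}, {{0, 1}}}" by auto
  have a: "{} \<notin> connected_edges (Suc 0)" by (auto simp: connected_edges_def reach_empty)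
  have r: "reach {{0, 1}} 1 0" by (rule reach_edge) (simp add: insert_commute)
  have b: "{{0, 1}} \<in> connected_edges (Suc 0)"
    unfolding connected_edges_def Fn_edges_1 using r by (auto simp: le_Suc_eq)
  have "connected_edges (Suc 0) \<subseteq> Pow {{0, 1}}" unfolding connected_edges_def Fn_edges_1 by auto
  then show ?thesis using a b P by auto
qed

lemma split_edges_1: "split_edges (Suc 0) = {{}}"
proof -
  have P: "Pow {{0, 1::nat}} = {{}, {{0, 1}}}" by auto
  have a: "{} \<in> split_edges (Suc 0)" by (auto simp: split_edges_def reach_empty le_Suc_eq)
  have b: "{{0, 1}} \<notin> split_edges (Suc 0)"
    unfolding split_edges_def Fn_edges_1 using reach_edge[of 1 0 "{{0,1}}"] by (auto simp: insert_commute)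
  have "split_edges (Suc 0) \<subseteq> Pow {{0, 1}}" unfolding split_edges_def Fn_edges_1 by auto
  then show ?thesis using a b P by auto
qed

lemma connected_split_gf_1: "connected_gf y (Suc 0) = 1" "split_gf y (Suc 0) = 1"
  by (simp_all add: connected_gf_def split_gf_def connected_edges_1 split_edges_1)

lemma connected_gf_eq_fan_gf: "1 \<le> n \<Longrightarrow> connected_gf y n = fan_gf y n"
  by (rule eq_fan_gf_if_recursion[where g = "split_gf y"])
     (simp_all add: connected_split_gf_1 connected_gf_Suc split_gf_Suc)

lemma Fn_edges_connected: "Fn_edges n \<in> connected_edges n"
proof -
  have "reach (Fn_edges n) v 0" if "v \<in> {0..n}" for v
  proof (cases "v = 0")
    case False
    then have "{v, 0} \<in> Fn_edges n" using that by (auto simp: Fn_edges_def insert_commute)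
    then show ?thesis by (rule reach_edge)
  qed simp
  then show ?thesis by (auto simp: connected_edges_def)
qed

lemma graph_rank_connected_edges: "A \<in> connected_edges n \<Longrightarrow> graph_rank {0..n} A = n"
  using ncomp_eq_1_if_reach_root[of 0 "{0..n}" A] by (auto simp: connected_edges_def graph_rank_def)

lemma graph_rank_less_if_not_connected:
  assumes "1 \<le> n" "A \<subseteq> Fn_edges n" "A \<notin> connected_edges n"
  shows "graph_rank {0..n} A < n"
proof -
  from assms(2,3) obtain v where "v \<in> {0..n}" "\<not> reach A v 0" by (auto simp: connected_edges_def)
  then have "2 \<le> ncomp {0..n} A" by (intro ncomp_ge_2_if_not_reach_root) auto
  then show ?thesis using assms(1) by (simp add: graph_rank_def)
qed

lemma tutte_Fn_eq_connected_gf: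
  assumes "1 \<le> n"
  shows "tutte (Fn_vertices n) (Fn_edges n) 1 y = connected_gf y n"
proof -
  let ?V = "{0..n}"
  have rank_E: "graph_rank ?V (Fn_edges n) = n" by (rule graph_rank_connected_edges[OF Fn_edges_connected])
  let ?t = "\<lambda>A. ((1::real) - 1) ^ (graph_rank ?V (Fn_edges n) - graph_rank ?V A) *
                 (y - 1) ^ (card A - graph_rank ?V A)"
  have "tutte (Fn_vertices n) (Fn_edges n) 1 y = sum ?t (Pow (Fn_edges n))"
    unfolding tutte_def Fn_vertices_def ..
  also have "\<dots> = sum ?t (connected_edges n)"
    by (rule sum.mono_neutral_right)
       (use connected_edges_Pow graph_rank_less_if_not_connected[OF assms] rank_E in auto)
  also have "\<dots> = connected_gf y n"
    unfolding connected_gf_def by (rule sum.cong) (auto simp: graph_rank_connected_edges rank_E)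
  finally show ?thesis .
qed

section \<open>Toppling on the fan\<close>

definition nbrs :: "nat \<Rightarrow> nat \<Rightarrow> nat set" where
  "nbrs n i = {j \<in> {1..n}. {i, j} \<in> Fn_edges n}"

lemma nbrs_eq: "i \<in> {1..n} \<Longrightarrow> nbrs n i = {j \<in> {1..n}. j = i + 1 \<or> i = j + 1}"
  by (auto simp: nbrs_def Fn_edges_def Pn_edges_def doubleton_eq_iff)

lemma nbrs_subset: "nbrs n i \<subseteq> {1..n}" by (auto simp: nbrs_def)
lemma finite_nbrs[simp]: "finite (nbrs n i)" by (rule finite_subset[OF nbrs_subset]) simp
lemma nbrs_irrefl: "i \<notin> nbrs n i" by (auto simp: nbrs_def Fn_edges_def Pn_edges_def doubleton_eq_iff)
lemma nbrs_sym: "i \<in> {1..n} \<Longrightarrow> j \<in> nbrs n i \<longleftrightarrow> i \<in> nbrs n j \<and> j \<in> {1..n}"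
  by (auto simp: nbrs_def insert_commute Fn_edges_def Pn_edges_def doubleton_eq_iff)

lemma card_nbrs_le2: "i \<in> {1..n} \<Longrightarrow> card (nbrs n i) \<le> 2"
proof -
  assume i: "i \<in> {1..n}"
  have "nbrs n i \<subseteq> {i - 1, i + 1}" using i by (auto simp: nbrs_eq)
  then have "card (nbrs n i) \<le> card {i - 1, i + 1}" by (rule card_mono[rotated]) simp
  also have "\<dots> \<le> 2" by (simp add: card_insert_if)
  finally show ?thesis .
qed

lemma Fn_edges_at:
  assumes i: "i \<in> {1..n}"
  shows "{e \<in> Fn_edges n. i \<in> e} = (\<lambda>j. {i, j}) ` insert 0 (nbrs n i)"
proof (intro equalityI subsetI)
  fix e assume e: "e \<in> {e \<in> Fn_edges n. i \<in> e}"
  then have eE: "e \<in> Fn_edges n" "i \<in> e" by auto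
  then obtain j where j: "e = {i, j}" by (auto simp: Fn_edges_def Pn_edges_def insert_commute)
  show "e \<in> (\<lambda>j. {i, j}) ` insert 0 (nbrs n i)"
  proof (cases "j = 0")
    case True then show ?thesis using j by auto
  next
    case False
    then have "j \<in> {1..n}" using eE(1) j Fn_edges_sub[of e n] by auto
    then have "j \<in> nbrs n i" using eE j by (auto simp: nbrs_def)
    then show ?thesis using j by auto
  qed
next
  fix e assume "e \<in> (\<lambda>j. {i, j}) ` insert 0 (nbrs n i)"
  then show "e \<in> {e \<in> Fn_edges n. i \<in> e}" using i
    by (auto simp: nbrs_def Fn_edges_def)
qed

lemma Fn_deg_nbrs: assumes i: "i \<in> {1..n}" shows "Fn_deg n i = card (nbrs n i) + 1"
proof -
  have inj: "inj_on (\<lambda>j. {i, j}) (insert 0 (nbrs n i))"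
    using i nbrs_irrefl[of i n] by (intro inj_onI) (auto simp: doubleton_eq_iff)
  have "0 \<notin> nbrs n i" using nbrs_subset by fastforce
  then have "card (insert 0 (nbrs n i)) = card (nbrs n i) + 1" by simp
  then show ?thesis unfolding Fn_deg_def Fn_edges_at[OF i] card_image[OF inj] .
qed

lemma topple_in: "i \<in> {1..n} \<Longrightarrow> j \<in> {1..n} \<Longrightarrow>
   topple n i c j = (if j = i then c i - Fn_deg n i else if j \<in> nbrs n i then c j + 1 else c j)"
  by (auto simp: topple_def nbrs_def)

lemma topple_out: "i \<in> {1..n} \<Longrightarrow> j \<notin> {1..n} \<Longrightarrow> topple n i c j = c j"
  unfolding topple_def using Fn_edges_sub[of "{i, j}" n] by auto

lemma topple_configs: "i \<in> {1..n} \<Longrightarrow> c \<in> configs n \<Longrightarrow> topple n i c \<in> configs n"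
  using topple_out by (auto simp: configs_def)

definition grains :: "nat \<Rightarrow> (nat \<Rightarrow> nat) \<Rightarrow> nat" where
  "grains n c = (\<Sum>i=1..n. c i)"

lemma grains_topple:
  assumes i: "i \<in> {1..n}" and d: "Fn_deg n i \<le> c i"
  shows "grains n (topple n i c) + 1 = grains n c"
proof -
  have "int (topple n i c j) = int (c j) - (if j = i then int (Fn_deg n i) else 0)
          + (if j \<in> nbrs n i then 1 else 0)" if "j \<in> {1..n}" for j
    using topple_in[OF i that, of c] d nbrs_irrefl[of i n] by auto
  then have "(\<Sum>j=1..n. int (topple n i c j)) = (\<Sum>j=1..n. int (c j) - (if j = i then int (Fn_deg n i) else 0)
          + (if j \<in> nbrs n i then 1 else 0))" by (rule sum.cong[OF refl])
  also have "\<dots> = (\<Sum>j=1..n. int (c j)) - int (Fn_deg n i) + int (card (nbrs n i))"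
  proof -
    have "(\<Sum>j=1..n. (if j \<in> nbrs n i then 1 else 0::int)) = int (card (nbrs n i))"
    proof -
      have "(\<Sum>j=1..n. (if j \<in> nbrs n i then 1 else 0::int)) = (\<Sum>j\<in>{1..n} \<inter> nbrs n i. 1)"
        by (simp add: sum.If_cases)
      also have "{1..n} \<inter> nbrs n i = nbrs n i" using nbrs_subset by blast
      finally show ?thesis by simp
    qed
    moreover have "(\<Sum>j=1..n. (if j = i then int (Fn_deg n i) else 0)) = int (Fn_deg n i)"
      using i by (simp add: sum.delta)
    ultimately show ?thesis by (simp add: sum.distrib sum_subtractf)
  qed
  finally have "int (grains n (topple n i c)) = int (grains n c) - 1"
    unfolding grains_def using Fn_deg_nbrs[OF i] by simp
  then show ?thesis by linarith
qed

lemma topple_step_grains_less: "topple_step n c d \<Longrightarrow> grains n d < grains n c"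
  unfolding topple_step_def using grains_topple by fastforce

lemma topple_step_configs: "topple_step n c d \<Longrightarrow> c \<in> configs n \<Longrightarrow> d \<in> configs n"
  unfolding topple_step_def using topple_configs by blast

lemma stable_no_step: "stable n c \<Longrightarrow> \<not> topple_step n c d"
  unfolding stable_def topple_step_def by fastforce

lemma unstable_step: "c \<in> configs n \<Longrightarrow> \<not> stable n c \<Longrightarrow> \<exists>d. topple_step n c d"
  unfolding stable_def topple_step_def by (auto simp: not_less)

lemma stabilisation_exists: "c \<in> configs n \<Longrightarrow> \<exists>d. stabilises_to n c d"
proof (induction "grains n c" arbitrary: c rule: less_induct)
  case less
  show ?case
  proof (cases "stable n c")
    case True then show ?thesis unfolding stabilises_to_def by blast
  next
    case False
    then obtain c1 where c1: "topple_step n c c1" using unstable_step less.prems by blast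
    then have "grains n c1 < grains n c" by (rule topple_step_grains_less)
    moreover have "c1 \<in> configs n" using c1 less.prems by (rule topple_step_configs)
    ultimately obtain d where "stabilises_to n c1 d" using less.hyps by blast
    then show ?thesis using c1 unfolding stabilises_to_def by (meson converse_rtranclp_into_rtranclp)
  qed
qed

lemma topple_commute:
  assumes i: "i \<in> {1..n}" and j: "j \<in> {1..n}" and ij: "i \<noteq> j"
    and di: "Fn_deg n i \<le> c i" and dj: "Fn_deg n j \<le> c j"
  shows "topple n j (topple n i c) = topple n i (topple n j c)"
proof
  fix k
  show "topple n j (topple n i c) k = topple n i (topple n j c) k"
  proof (cases "k \<in> {1..n}")
    case False then show ?thesis using i j by (simp add: topple_out)
  next
    case True
    then show ?thesis using i j ij di dj by (auto simp: topple_in)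
  qed
qed

lemma topple_keeps_unstable:
  assumes i: "i \<in> {1..n}" and j: "j \<in> {1..n}" and ij: "i \<noteq> j" and dj: "Fn_deg n j \<le> c j"
  shows "Fn_deg n j \<le> topple n i c j"
  using topple_in[OF i j] ij dj by auto

lemma topple_step_diamond:
  assumes s1: "topple_step n c c1" and s2: "topple_step n c c2" and ne: "c1 \<noteq> c2"
  obtains c3 where "topple_step n c1 c3" "topple_step n c2 c3"
proof -
  from s1 obtain i where i: "i \<in> {1..n}" "Fn_deg n i \<le> c i" "c1 = topple n i c"
    unfolding topple_step_def by blast
  from s2 obtain j where j: "j \<in> {1..n}" "Fn_deg n j \<le> c j" "c2 = topple n j c"
    unfolding topple_step_def by blast
  have ij: "i \<noteq> j" using ne i j by auto
  have "topple n j c1 = topple n i c2" using topple_commute[OF i(1) j(1) ij i(2) j(2)] i j by simp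
  moreover have "topple_step n c1 (topple n j c1)"
    unfolding topple_step_def using j topple_keeps_unstable[of i n j c] i ij by auto
  moreover have "topple_step n c2 (topple n i c2)"
    unfolding topple_step_def using i topple_keeps_unstable[of j n i c] j ij by auto
  ultimately show ?thesis using that by metis
qed

lemma stabilisation_unique:
  "c \<in> configs n \<Longrightarrow> stabilises_to n c d1 \<Longrightarrow> stabilises_to n c d2 \<Longrightarrow> d1 = d2"
proof (induction "grains n c" arbitrary: c d1 d2 rule: less_induct)
  case less
  show ?case
  proof (cases "stable n c")
    case True
    then have "d1 = c" "d2 = c" using less.prems stable_no_step
      by (metis converse_rtranclpE stabilises_to_def)+
    then show ?thesis by simp
  next
    case False
    from less.prems(2) False obtain c1 where s1: "topple_step n c c1" "stabilises_to n c1 d1"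
      unfolding stabilises_to_def by (metis converse_rtranclpE)
    from less.prems(3) False obtain c2 where s2: "topple_step n c c2" "stabilises_to n c2 d2"
      unfolding stabilises_to_def by (metis converse_rtranclpE)
    have cf1: "c1 \<in> configs n" using s1(1) less.prems(1) by (rule topple_step_configs)
    have cf2: "c2 \<in> configs n" using s2(1) less.prems(1) by (rule topple_step_configs)
    have IH1: "stabilises_to n c1 e \<Longrightarrow> d1 = e" for e
      using less.hyps[OF topple_step_grains_less[OF s1(1)] cf1 s1(2)] .
    have IH2: "stabilises_to n c2 e \<Longrightarrow> d2 = e" for e
      using less.hyps[OF topple_step_grains_less[OF s2(1)] cf2 s2(2)] .
    show ?thesis
    proof (cases "c1 = c2")
      case True then show ?thesis using IH1 s2(2) by simp
    next
      case False
      then obtain c3 where st13: "topple_step n c1 c3" and st23: "topple_step n c2 c3"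
        using topple_step_diamond[OF s1(1) s2(1)] by blast
      obtain e where e: "stabilises_to n c3 e"
        using stabilisation_exists[OF topple_step_configs[OF st13 cf1]] by blast
      have "stabilises_to n c1 e" "stabilises_to n c2 e"
        using e st13 st23 unfolding stabilises_to_def by (meson converse_rtranclp_into_rtranclp)+
      then show ?thesis using IH1 IH2 by simp
    qed
  qed
qed

section \<open>Recurrence via the burning criterion\<close>

definition forbidden :: "nat \<Rightarrow> (nat \<Rightarrow> nat) \<Rightarrow> nat set \<Rightarrow> bool" where
  "forbidden n c S \<longleftrightarrow> S \<noteq> {} \<and> S \<subseteq> {1..n} \<and> (\<forall>i\<in>S. c i < card (nbrs n i \<inter> S))"

definition no_forbidden :: "nat \<Rightarrow> (nat \<Rightarrow> nat) \<Rightarrow> bool" where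
  "no_forbidden n c \<longleftrightarrow> \<not> (\<exists>S. forbidden n c S)"

definition burnable :: "nat \<Rightarrow> (nat \<Rightarrow> nat) \<Rightarrow> bool" where
  "burnable n c \<longleftrightarrow> stable n c \<and> no_forbidden n c"

lemma forbidden_topple_Diff:
  assumes i: "i \<in> {1..n}" and S: "forbidden n (topple n i c) S"
  shows "forbidden n c (S - {i})"
proof -
  have "S - {i} \<noteq> {}"
  proof
    assume "S - {i} = {}"
    with S have "S = {i}" by (auto simp: forbidden_def)
    then show False using S nbrs_irrefl[of i n] by (auto simp: forbidden_def)
  qed
  moreover have "c j < card (nbrs n j \<inter> (S - {i}))" if j: "j \<in> S - {i}" for j
  proof -
    have jn: "j \<in> {1..n}" "j \<noteq> i" using j S by (auto simp: forbidden_def)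
    have lt: "topple n i c j < card (nbrs n j \<inter> S)" using S j by (auto simp: forbidden_def)
    show ?thesis
    proof (cases "j \<in> nbrs n i")
      case True
      have "card (nbrs n j \<inter> S) \<le> card (insert i (nbrs n j \<inter> (S - {i})))" by (rule card_mono) auto
      also have "\<dots> \<le> card (nbrs n j \<inter> (S - {i})) + 1" by (simp add: card_insert_if)
      finally show ?thesis using lt topple_in[OF i jn(1)] jn True by simp
    next
      case False
      then have "i \<notin> nbrs n j" using nbrs_sym[OF jn(1), of i] i by auto
      then have "nbrs n j \<inter> S = nbrs n j \<inter> (S - {i})" by auto
      then show ?thesis using lt topple_in[OF i jn(1)] jn False by simp
    qed
  qed
  ultimately show ?thesis using S by (auto simp: forbidden_def)
qed

lemma topple_no_forbidden:
  "i \<in> {1..n} \<Longrightarrow> no_forbidden n c \<Longrightarrow> no_forbidden n (topple n i c)"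
  using forbidden_topple_Diff unfolding no_forbidden_def by blast

lemma no_forbidden_mono:
  assumes "\<forall>j\<in>{1..n}. c j \<le> c' j" "no_forbidden n c" shows "no_forbidden n c'"
  using assms unfolding no_forbidden_def forbidden_def by (meson le_less_trans subsetD)

lemma topple_steps_no_forbidden: "(topple_step n)\<^sup>*\<^sup>* c d \<Longrightarrow> no_forbidden n c \<Longrightarrow> no_forbidden n d"
  by (induction rule: rtranclp_induct) (auto simp: topple_step_def intro: topple_no_forbidden)

lemma chain_step_burnable: "chain_step n c d \<Longrightarrow> burnable n c \<Longrightarrow> burnable n d"
proof -
  assume cs: "chain_step n c d" and g: "burnable n c"
  then obtain i where i: "i \<in> {1..n}" "stabilises_to n (c(i := c i + 1)) d"
    by (auto simp: chain_step_def)
  have "no_forbidden n (c(i := c i + 1))"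
    by (rule no_forbidden_mono[of n c]) (use g in \<open>auto simp: burnable_def\<close>)
  then have "no_forbidden n d" using i(2) topple_steps_no_forbidden by (auto simp: stabilises_to_def)
  then show "burnable n d" using i(2) by (auto simp: burnable_def stabilises_to_def)
qed

lemma chain_steps_burnable: "(chain_step n)\<^sup>*\<^sup>* c d \<Longrightarrow> burnable n c \<Longrightarrow> burnable n d"
  by (induction rule: rtranclp_induct) (auto intro: chain_step_burnable)

lemma chain_steps_stable: "(chain_step n)\<^sup>*\<^sup>* c d \<Longrightarrow> stable n c \<Longrightarrow> stable n d"
  by (induction rule: rtranclp_induct) (auto simp: chain_step_def stabilises_to_def)

definition max_stable :: "nat \<Rightarrow> nat \<Rightarrow> nat" where
  "max_stable n = (\<lambda>i. if i \<in> {1..n} then Fn_deg n i - 1 else 0)"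

lemma max_stable_nbrs: "i \<in> {1..n} \<Longrightarrow> max_stable n i = card (nbrs n i)"
  by (simp add: max_stable_def Fn_deg_nbrs)

lemma stable_max_stable: "stable n (max_stable n)"
proof -
  have "max_stable n i < Fn_deg n i" if "i \<in> {1..n}" for i
    using Fn_deg_nbrs[OF that] that by (simp add: max_stable_def)
  moreover have "max_stable n \<in> configs n" by (simp add: configs_def max_stable_def)
  ultimately show ?thesis by (simp add: stable_def)
qed

lemma burnable_max_stable: "burnable n (max_stable n)"
proof -
  have "no_forbidden n (max_stable n)"
    unfolding no_forbidden_def forbidden_def
  proof
    assume "\<exists>S. S \<noteq> {} \<and> S \<subseteq> {1..n} \<and> (\<forall>i\<in>S. max_stable n i < card (nbrs n i \<inter> S))"
    then obtain S i where h: "i \<in> S" "S \<subseteq> {1..n}" "max_stable n i < card (nbrs n i \<inter> S)" by blast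
    have "card (nbrs n i \<inter> S) \<le> card (nbrs n i)" by (rule card_mono) auto
    moreover have "max_stable n i = card (nbrs n i)" using h(1,2) by (intro max_stable_nbrs) blast
    ultimately show False using h(3) by simp
  qed
  then show ?thesis using stable_max_stable by (simp add: burnable_def)
qed

lemma stable_le_max_stable: "stable n c \<Longrightarrow> c i \<le> max_stable n i"
proof (cases "i \<in> {1..n}")
  case True
  assume "stable n c"
  then have "c i < Fn_deg n i" using True by (auto simp: stable_def)
  then show ?thesis using True by (simp add: max_stable_def)
next
  case False
  assume "stable n c"
  then have "c i = 0" using False by (auto simp: stable_def configs_def)
  then show ?thesis by simp
qed

lemma chain_to_max_stable: "stable n c \<Longrightarrow> (chain_step n)\<^sup>*\<^sup>* c (max_stable n)"
proof (induction "grains n (max_stable n) - grains n c" arbitrary: c rule: less_induct)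
  case less
  show ?case
  proof (cases "\<forall>i\<in>{1..n}. c i = max_stable n i")
    case True
    then have "c = max_stable n" using less.prems by (auto simp: stable_def configs_def max_stable_def)
    then show ?thesis by simp
  next
    case False
    then obtain i where i: "i \<in> {1..n}" "c i \<noteq> max_stable n i" by auto
    then have lt: "c i < max_stable n i" using stable_le_max_stable[OF less.prems, of i] by simp
    let ?d = "c(i := c i + 1)"
    have sd: "stable n ?d" using less.prems i lt
      by (auto simp: stable_def configs_def max_stable_def)
    have cs: "chain_step n c ?d"
      unfolding chain_step_def stabilises_to_def using less.prems sd i by blast
    have le: "?d j \<le> max_stable n j" for j using stable_le_max_stable[OF sd] .
    have fin: "finite {1..n}" by simp
    have e1: "grains n ?d = ?d i + (\<Sum>j\<in>{1..n}-{i}. ?d j)"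
      unfolding grains_def by (rule sum.remove[OF fin i(1)])
    have e2: "grains n c = c i + (\<Sum>j\<in>{1..n}-{i}. c j)"
      unfolding grains_def by (rule sum.remove[OF fin i(1)])
    have e3: "(\<Sum>j\<in>{1..n}-{i}. ?d j) = (\<Sum>j\<in>{1..n}-{i}. c j)"
      by (rule sum.cong) auto
    have "grains n ?d = grains n c + 1" using e1 e2 e3 by simp
    moreover have "grains n ?d \<le> grains n (max_stable n)" unfolding grains_def by (rule sum_mono) (rule le)
    ultimately have "grains n (max_stable n) - grains n ?d < grains n (max_stable n) - grains n c" by linarith
    then have "(chain_step n)\<^sup>*\<^sup>* ?d (max_stable n)" using less.hyps sd by blast
    then show ?thesis using cs by (meson converse_rtranclp_into_rtranclp)
  qed
qed

lemma topple_add_config: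
  assumes "i \<in> {1..n}" "Fn_deg n i \<le> c i"
  shows "topple n i (\<lambda>j. c j + x j) = (\<lambda>j. topple n i c j + x j)"
proof
  fix j
  show "topple n i (\<lambda>j. c j + x j) j = topple n i c j + x j"
    unfolding topple_def using assms(2) by simp
qed

lemma topple_step_add_config: "topple_step n c d \<Longrightarrow> topple_step n (\<lambda>j. c j + x j) (\<lambda>j. d j + x j)"
proof -
  assume "topple_step n c d"
  then obtain i where i: "i \<in> {1..n}" "Fn_deg n i \<le> c i" "d = topple n i c" by (auto simp: topple_step_def)
  then have "(\<lambda>j. d j + x j) = topple n i (\<lambda>j. c j + x j)" using topple_add_config[of i n c x] i by simp
  moreover have "Fn_deg n i \<le> c i + x i" using i by simp
  ultimately show ?thesis unfolding topple_step_def using i(1) by blast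
qed

lemma topple_steps_add_config: "(topple_step n)\<^sup>*\<^sup>* c d \<Longrightarrow> (topple_step n)\<^sup>*\<^sup>* (\<lambda>j. c j + x j) (\<lambda>j. d j + x j)"
  by (induction rule: rtranclp_induct) (auto intro: topple_step_add_config rtranclp.rtrancl_into_rtrancl)

definition ones_config :: "nat \<Rightarrow> nat \<Rightarrow> nat" where
  "ones_config n j = (if j \<in> {1..n} then 1 else 0)"

text \<open>The configuration obtained from c + ones_config n by toppling every vertex outside U once
  (Dhar's burning algorithm, with U the unburnt vertices).\<close>

definition burn_config :: "nat \<Rightarrow> (nat \<Rightarrow> nat) \<Rightarrow> nat set \<Rightarrow> nat \<Rightarrow> nat" where
  "burn_config n c U = (\<lambda>j. if j \<in> {1..n} then (if j \<in> U then c j + 1 + card (nbrs n j - U)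
                    else c j - card (nbrs n j \<inter> U)) else 0)"

lemma card_nbrs_split: "card (nbrs n j) = card (nbrs n j \<inter> U) + card (nbrs n j - U)"
proof -
  have "nbrs n j = (nbrs n j \<inter> U) \<union> (nbrs n j - U)" by auto
  then have "card (nbrs n j) = card ((nbrs n j \<inter> U) \<union> (nbrs n j - U))" by simp
  also have "\<dots> = card (nbrs n j \<inter> U) + card (nbrs n j - U)"
    by (rule card_Un_disjoint) auto
  finally show ?thesis .
qed

lemma card_nbrs_Diff_neighbour:
  assumes "j \<in> U" "j \<in> nbrs n k"
  shows "card (nbrs n k \<inter> U) = card (nbrs n k \<inter> (U - {j})) + 1"
    and "card (nbrs n k - (U - {j})) = card (nbrs n k - U) + 1"
proof -
  have "nbrs n k \<inter> U = insert j (nbrs n k \<inter> (U - {j}))"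
    and "nbrs n k - (U - {j}) = insert j (nbrs n k - U)" using assms by auto
  then show "card (nbrs n k \<inter> U) = card (nbrs n k \<inter> (U - {j})) + 1"
    and "card (nbrs n k - (U - {j})) = card (nbrs n k - U) + 1" using assms(1) by simp_all
qed

lemma topple_burn_config:
  assumes U: "U \<subseteq> {1..n}" and inv: "\<forall>k\<in>{1..n}-U. card (nbrs n k \<inter> U) \<le> c k" and j: "j \<in> U"
  shows "topple n j (burn_config n c U) = burn_config n c (U - {j})"
proof
  fix k
  have jn: "j \<in> {1..n}" using U j by auto
  show "topple n j (burn_config n c U) k = burn_config n c (U - {j}) k"
  proof (cases "k \<in> {1..n}")
    case False
    have "burn_config n c U k = 0" "burn_config n c (U - {j}) k = 0"
      unfolding burn_config_def by (simp_all only: if_not_P[OF False])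
    then show ?thesis using topple_out[OF jn False] by simp
  next
    case kn: True
    have t: "topple n j (burn_config n c U) k = (if k = j then burn_config n c U j - Fn_deg n j
             else if k \<in> nbrs n j then burn_config n c U k + 1 else burn_config n c U k)"
      by (rule topple_in[OF jn kn])
    consider "k = j" | "k \<noteq> j" "j \<in> nbrs n k" "k \<in> U" | "k \<noteq> j" "j \<in> nbrs n k" "k \<notin> U"
      | "k \<noteq> j" "j \<notin> nbrs n k" by blast
    then show ?thesis
    proof cases
      case 1
      have "nbrs n j \<inter> (U - {j}) = nbrs n j \<inter> U" using nbrs_irrefl[of j n] by auto
      then show ?thesis
        using t 1 jn j Fn_deg_nbrs[OF jn] card_nbrs_split[of n j U] by (simp add: burn_config_def)
    next
      case 2
      then show ?thesis
        using t kn j card_nbrs_Diff_neighbour[OF j] nbrs_sym[OF jn] by (simp add: burn_config_def)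
    next
      case 3
      then have "card (nbrs n k \<inter> U) \<le> c k" using inv kn by auto
      then show ?thesis
        using t 3 kn card_nbrs_Diff_neighbour[OF j 3(2)] nbrs_sym[OF jn] by (simp add: burn_config_def)
    next
      case 4
      then have "nbrs n k \<inter> (U - {j}) = nbrs n k \<inter> U" "nbrs n k - (U - {j}) = nbrs n k - U" by auto
      then show ?thesis using t 4 kn nbrs_sym[OF kn, of j] jn by (simp add: burn_config_def)
    qed
  qed
qed

lemma topple_step_burn_config:
  assumes U: "U \<subseteq> {1..n}" and inv: "\<forall>k\<in>{1..n}-U. card (nbrs n k \<inter> U) \<le> c k"
    and j: "j \<in> U" and cj: "card (nbrs n j \<inter> U) \<le> c j"
  shows "topple_step n (burn_config n c U) (burn_config n c (U - {j}))"
proof -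
  have jn: "j \<in> {1..n}" using U j by auto
  have "Fn_deg n j = card (nbrs n j \<inter> U) + card (nbrs n j - U) + 1"
    using Fn_deg_nbrs[OF jn] card_nbrs_split[of n j U] by simp
  then have "Fn_deg n j \<le> burn_config n c U j" using jn j cj by (simp add: burn_config_def)
  then show ?thesis unfolding topple_step_def using jn topple_burn_config[OF U inv j] by metis
qed

lemma topple_steps_burn_config:
  assumes c: "c \<in> configs n" and nf: "no_forbidden n c"
  shows "U \<subseteq> {1..n} \<Longrightarrow> (\<forall>k\<in>{1..n}-U. card (nbrs n k \<inter> U) \<le> c k) \<Longrightarrow> (topple_step n)\<^sup>*\<^sup>* (burn_config n c U) c"
proof (induction "card U" arbitrary: U rule: less_induct)
  case less
  show ?case
  proof (cases "U = {}")
    case True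
    have "burn_config n c U = c"
    proof
      fix j show "burn_config n c U j = c j" using True c by (auto simp: burn_config_def configs_def)
    qed
    then show ?thesis by simp
  next
    case False
    then have "\<not> forbidden n c U" using nf by (auto simp: no_forbidden_def)
    then obtain j where j: "j \<in> U" "\<not> c j < card (nbrs n j \<inter> U)"
      using False less.prems(1) unfolding forbidden_def by blast
    then have cj: "card (nbrs n j \<inter> U) \<le> c j" by simp
    have st: "topple_step n (burn_config n c U) (burn_config n c (U - {j}))"
      by (rule topple_step_burn_config[OF less.prems j(1) cj])
    have finU: "finite U" using less.prems(1) by (rule finite_subset) simp
    have lt: "card (U - {j}) < card U" by (rule card_Diff1_less[OF finU j(1)])
    have sub: "U - {j} \<subseteq> {1..n}" using less.prems(1) by auto
    have inv: "\<forall>k\<in>{1..n}-(U - {j}). card (nbrs n k \<inter> (U - {j})) \<le> c k"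
    proof
      fix k assume k: "k \<in> {1..n}-(U - {j})"
      have "card (nbrs n k \<inter> (U - {j})) \<le> card (nbrs n k \<inter> U)" by (rule card_mono) auto
      moreover have "card (nbrs n k \<inter> U) \<le> c k" using k less.prems(2) cj by (cases "k = j") auto
      ultimately show "card (nbrs n k \<inter> (U - {j})) \<le> c k" by simp
    qed
    have "(topple_step n)\<^sup>*\<^sup>* (burn_config n c (U - {j})) c" using less.hyps[OF lt sub inv] .
    then show ?thesis using st by (meson converse_rtranclp_into_rtranclp)
  qed
qed

lemma topple_steps_add_ones:
  assumes c: "c \<in> configs n" and nf: "no_forbidden n c"
  shows "(topple_step n)\<^sup>*\<^sup>* (\<lambda>j. c j + ones_config n j) c"
proof -
  have "burn_config n c {1..n} = (\<lambda>j. c j + ones_config n j)"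
  proof
    fix j
    have "nbrs n j - {1..n} = {}" using nbrs_subset by blast
    then show "burn_config n c {1..n} j = c j + ones_config n j" using c by (auto simp: burn_config_def ones_config_def configs_def)
  qed
  moreover have "(topple_step n)\<^sup>*\<^sup>* (burn_config n c {1..n}) c" by (rule topple_steps_burn_config[OF c nf]) auto
  ultimately show ?thesis by simp
qed

lemma topple_steps_add_multiple_ones:
  assumes c: "c \<in> configs n" and nf: "no_forbidden n c"
  shows "(topple_step n)\<^sup>*\<^sup>* (\<lambda>j. c j + m * ones_config n j) c"
proof (induction m)
  case 0 then show ?case by simp
next
  case (Suc m)
  have "(topple_step n)\<^sup>*\<^sup>* (\<lambda>j. (c j + ones_config n j) + m * ones_config n j) (\<lambda>j. c j + m * ones_config n j)"
    using topple_steps_add_config[OF topple_steps_add_ones[OF c nf], of "\<lambda>j. m * ones_config n j"] by simp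
  moreover have "(\<lambda>j. (c j + ones_config n j) + m * ones_config n j) = (\<lambda>j. c j + Suc m * ones_config n j)" by auto
  ultimately show ?case using Suc.IH by (metis rtranclp_trans)
qed

lemma grains_decrement_less:
  assumes i: "i \<in> {1..n}" and x: "0 < x i"
  shows "grains n (x(i := x i - 1)) < grains n x"
proof -
  have fin: "finite {1..n}" by simp
  have e1: "grains n (x(i := x i - 1)) = (x i - 1) + (\<Sum>j\<in>{1..n}-{i}. (x(i := x i - 1)) j)"
    unfolding grains_def using sum.remove[OF fin i, of "x(i := x i - 1)"] by simp
  have e2: "grains n x = x i + (\<Sum>j\<in>{1..n}-{i}. x j)"
    unfolding grains_def by (rule sum.remove[OF fin i])
  have e3: "(\<Sum>j\<in>{1..n}-{i}. (x(i := x i - 1)) j) = (\<Sum>j\<in>{1..n}-{i}. x j)"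
    by (rule sum.cong) auto
  show ?thesis using e1 e2 e3 x by simp
qed

lemma chain_steps_add_config:
  "stable n s \<Longrightarrow> x \<in> configs n \<Longrightarrow> \<exists>d. (chain_step n)\<^sup>*\<^sup>* s d \<and> stabilises_to n (\<lambda>j. s j + x j) d"
proof (induction "grains n x" arbitrary: s x rule: less_induct)
  case less
  show ?case
  proof (cases "\<forall>j\<in>{1..n}. x j = 0")
    case True
    have "(\<lambda>j. s j + x j) = s"
    proof
      fix j show "s j + x j = s j" using True less.prems(2) by (cases "j \<in> {1..n}") (auto simp: configs_def)
    qed
    then show ?thesis using less.prems(1) unfolding stabilises_to_def by auto
  next
    case False
    then obtain i where i: "i \<in> {1..n}" "0 < x i" by auto
    let ?s1 = "s(i := s i + 1)"
    have s1c: "?s1 \<in> configs n" using less.prems(1) i(1) by (auto simp: stable_def configs_def)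
    obtain s' where s': "stabilises_to n ?s1 s'" using stabilisation_exists[OF s1c] by blast
    have cs: "chain_step n s s'" unfolding chain_step_def using less.prems(1) i(1) s' by blast
    let ?x' = "x(i := x i - 1)"
    have x'c: "?x' \<in> configs n" using less.prems(2) by (auto simp: configs_def)
    have lt: "grains n ?x' < grains n x" using grains_decrement_less[of i n x] i by simp
    have ss': "stable n s'" using s' by (simp add: stabilises_to_def)
    obtain d where d: "(chain_step n)\<^sup>*\<^sup>* s' d" "stabilises_to n (\<lambda>j. s' j + ?x' j) d"
      using less.hyps[OF lt ss' x'c] by blast
    have eq: "(\<lambda>j. s j + x j) = (\<lambda>j. ?s1 j + ?x' j)" using i(2) by auto
    have "(topple_step n)\<^sup>*\<^sup>* (\<lambda>j. ?s1 j + ?x' j) (\<lambda>j. s' j + ?x' j)"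
      using topple_steps_add_config[of n ?s1 s' ?x'] s' by (simp add: stabilises_to_def)
    then have "stabilises_to n (\<lambda>j. s j + x j) d" using d(2) eq
      unfolding stabilises_to_def by (metis rtranclp_trans)
    moreover have "(chain_step n)\<^sup>*\<^sup>* s d" using cs d(1) by (meson converse_rtranclp_into_rtranclp)
    ultimately show ?thesis by blast
  qed
qed

lemma max_stable_le2: "max_stable n j \<le> 2"
proof (cases "j \<in> {1..n}")
  case True then show ?thesis using card_nbrs_le2[OF True] max_stable_nbrs[OF True] by simp
next
  case False then have "max_stable n j = 0" unfolding max_stable_def by (simp only: if_not_P[OF False] if_False)
  then show ?thesis by simp
qed

lemma chain_from_max_stable:
  assumes g: "burnable n c"
  shows "(chain_step n)\<^sup>*\<^sup>* (max_stable n) c"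
proof -
  have cc: "c \<in> configs n" and nf: "no_forbidden n c" and sc: "stable n c" using g by (auto simp: burnable_def stable_def)
  let ?x = "\<lambda>j. if j \<in> {1..n} then c j + 2 - max_stable n j else 0"
  have xc: "?x \<in> configs n" by (simp add: configs_def)
  obtain d where d: "(chain_step n)\<^sup>*\<^sup>* (max_stable n) d" "stabilises_to n (\<lambda>j. max_stable n j + ?x j) d"
    using chain_steps_add_config[OF stable_max_stable xc] by blast
  have eq: "(\<lambda>j. max_stable n j + ?x j) = (\<lambda>j. c j + 2 * ones_config n j)"
  proof
    fix j
    show "max_stable n j + ?x j = c j + 2 * ones_config n j"
      using max_stable_le2[of n j] cc by (auto simp: ones_config_def configs_def max_stable_def)
  qed
  have "stabilises_to n (\<lambda>j. c j + 2 * ones_config n j) c"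
    using topple_steps_add_multiple_ones[OF cc nf, of 2] sc by (simp add: stabilises_to_def)
  moreover have "(\<lambda>j. c j + 2 * ones_config n j) \<in> configs n" using cc by (auto simp: configs_def ones_config_def)
  ultimately have "d = c" using stabilisation_unique d(2) eq by metis
  then show ?thesis using d(1) by simp
qed

theorem ASM_recurrent_iff_burnable: "ASM_recurrent n c \<longleftrightarrow> burnable n c"
proof
  assume r: "ASM_recurrent n c"
  then have sc: "stable n c" by (simp add: ASM_recurrent_def)
  have "(chain_step n)\<^sup>*\<^sup>* c (max_stable n)" by (rule chain_to_max_stable[OF sc])
  then have "(chain_step n)\<^sup>*\<^sup>* (max_stable n) c" using r by (simp add: ASM_recurrent_def)
  then show "burnable n c" using burnable_max_stable chain_steps_burnable by blast
next
  assume g: "burnable n c"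
  then have sc: "stable n c" by (simp add: burnable_def)
  have "(chain_step n)\<^sup>*\<^sup>* d c" if "(chain_step n)\<^sup>*\<^sup>* c d" for d
  proof -
    have "stable n d" using chain_steps_stable that sc by blast
    then have "(chain_step n)\<^sup>*\<^sup>* d (max_stable n)" by (rule chain_to_max_stable)
    then show ?thesis using chain_from_max_stable[OF g] by (metis rtranclp_trans)
  qed
  then show "ASM_recurrent n c" using sc by (simp add: ASM_recurrent_def)
qed

section \<open>Recurrent configurations on the fan\<close>

definition unseparated_zeros :: "nat \<Rightarrow> (nat \<Rightarrow> nat) \<Rightarrow> bool" where
  "unseparated_zeros m c \<longleftrightarrow> (\<exists>a b. 1 \<le> a \<and> a < b \<and> b \<le> m \<and> c a = 0 \<and> c b = 0 \<and> (\<forall>t. a < t \<and> t < b \<longrightarrow> c t \<noteq> 2))"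

lemma nbrs_iff: "i \<in> {1..n} \<Longrightarrow> j \<in> nbrs n i \<longleftrightarrow> j \<in> {1..n} \<and> (j = i + 1 \<or> i = j + 1)"
  by (simp add: nbrs_eq)

lemma maximal_interval_from:
  fixes a :: nat
  assumes "finite S" "a \<in> S"
  obtains b where "a \<le> b" "{a..b} \<subseteq> S" "Suc b \<notin> S"
proof -
  let ?M = "{m. a \<le> m \<and> {a..m} \<subseteq> S}"
  have "?M \<subseteq> S" by auto
  then have fin: "finite ?M" using assms(1) by (rule finite_subset)
  have "a \<in> ?M" using assms(2) by simp
  then have b: "Max ?M \<in> ?M" using fin by (intro Max_in) auto
  have "Suc (Max ?M) \<notin> S"
  proof
    assume "Suc (Max ?M) \<in> S"
    then have "Suc (Max ?M) \<in> ?M" using b by (auto simp: le_Suc_eq)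
    then show False using Max_ge[OF fin] by fastforce
  qed
  then show ?thesis using b that by blast
qed

lemma forbidden_unseparated_zeros:
  assumes S: "forbidden n c S" and c2: "\<forall>i\<in>{1..n}. c i \<le> 2"
  shows "unseparated_zeros n c"
proof -
  from S have Sne: "S \<noteq> {}" and Ssub: "S \<subseteq> {1..n}" and Sc: "\<forall>i\<in>S. c i < card (nbrs n i \<inter> S)"
    by (auto simp: forbidden_def)
  have finS: "finite S" using Ssub by (rule finite_subset) simp
  define a where "a = Min S"
  have aS: "a \<in> S" and amin: "\<And>s. s \<in> S \<Longrightarrow> a \<le> s" using finS Sne by (simp_all add: a_def)
  have an: "a \<in> {1..n}" using aS Ssub by auto
  have nba: "nbrs n a \<inter> S \<subseteq> {a + 1}"
  proof
    fix x assume x: "x \<in> nbrs n a \<inter> S"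
    then have "x = a + 1 \<or> a = x + 1" using nbrs_iff[OF an] by auto
    then show "x \<in> {a + 1}" using amin x by fastforce
  qed
  have "nbrs n a \<inter> S \<noteq> {}" using Sc aS by fastforce
  then have a1: "a + 1 \<in> S" using nba by blast
  have "card (nbrs n a \<inter> S) \<le> 1" using card_mono[OF _ nba] by simp
  then have ca: "c a = 0" using Sc aS by fastforce
  obtain b where ab: "a + 1 \<le> b" and abS: "{a + 1..b} \<subseteq> S" and b1: "b + 1 \<notin> S"
    using maximal_interval_from[OF finS a1] by auto
  have bS: "b \<in> S" using abS ab by auto
  then have bn: "b \<in> {1..n}" using Ssub by auto
  have "nbrs n b \<inter> S \<subseteq> {b - 1}"
  proof
    fix x assume x: "x \<in> nbrs n b \<inter> S"
    then have "x = b + 1 \<or> b = x + 1" using nbrs_iff[OF bn] by auto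
    then show "x \<in> {b - 1}" using x b1 by auto
  qed
  then have "card (nbrs n b \<inter> S) \<le> 1" using card_mono[of "{b - 1}"] by simp
  then have cb: "c b = 0" using Sc bS by fastforce
  have "c t \<noteq> 2" if t: "a < t" "t < b" for t
  proof -
    have tS: "t \<in> S" using abS t by auto
    have "card (nbrs n t \<inter> S) \<le> card (nbrs n t)" by (rule card_mono) auto
    also have "\<dots> \<le> 2" using card_nbrs_le2 tS Ssub by blast
    finally have "card (nbrs n t \<inter> S) \<le> 2" .
    then show ?thesis using Sc tS by fastforce
  qed
  then show ?thesis unfolding unseparated_zeros_def
    using an bn ab ca cb by (intro exI[of _ a] exI[of _ b]) auto
qed

lemma unseparated_zeros_forbidden:
  assumes B: "unseparated_zeros n c" and c2: "\<forall>i\<in>{1..n}. c i \<le> 2"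
  shows "\<exists>S. forbidden n c S"
proof -
  from B obtain a b where ab: "1 \<le> a" "a < b" "b \<le> n" "c a = 0" "c b = 0" "\<forall>t. a < t \<and> t < b \<longrightarrow> c t \<noteq> 2"
    unfolding unseparated_zeros_def by blast
  let ?S = "{a..b}"
  have "c i < card (nbrs n i \<inter> ?S)" if i: "i \<in> ?S" for i
  proof -
    have inn: "i \<in> {1..n}" using i ab by auto
    have fin: "finite (nbrs n i \<inter> ?S)" by simp
    consider "i = a" | "i = b" | "a < i" "i < b" using i by fastforce
    then show ?thesis
    proof cases
      case 1
      then have "a + 1 \<in> nbrs n i \<inter> ?S" using ab inn nbrs_iff[OF inn] by auto
      then show ?thesis using 1 ab(4) fin by (auto simp: card_gt_0_iff)
    next
      case 2
      then have "b - 1 \<in> nbrs n i \<inter> ?S" using ab inn nbrs_iff[OF inn] by auto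
      then show ?thesis using 2 ab(5) fin by (auto simp: card_gt_0_iff)
    next
      case 3
      then have "{i - 1, i + 1} \<subseteq> nbrs n i \<inter> ?S" using ab inn nbrs_iff[OF inn] by auto
      then have "card {i - 1, i + 1} \<le> card (nbrs n i \<inter> ?S)" by (rule card_mono[OF fin])
      moreover have "card {i - 1, i + 1} = 2" using 3 by simp
      moreover have "c i \<le> 2" "c i \<noteq> 2" using c2 inn ab(6) 3 by auto
      ultimately show ?thesis by simp
    qed
  qed
  moreover have "?S \<noteq> {}" "?S \<subseteq> {1..n}" using ab by auto
  ultimately show ?thesis unfolding forbidden_def by blast
qed

lemma no_forbidden_iff_not_unseparated_zeros: "\<forall>i\<in>{1..n}. c i \<le> 2 \<Longrightarrow> no_forbidden n c \<longleftrightarrow> \<not> unseparated_zeros n c"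
  using forbidden_unseparated_zeros unseparated_zeros_forbidden unfolding no_forbidden_def by blast

lemma Fn_deg_eq:
  assumes "2 \<le> n" "i \<in> {1..n}"
  shows "Fn_deg n i = (if i = 1 \<or> i = n then 2 else 3)"
proof -
  have "nbrs n i = (if i = 1 then {2} else if i = n then {n - 1} else {i - 1, i + 1})"
    using assms by (auto simp: nbrs_eq)
  then show ?thesis using assms Fn_deg_nbrs[OF assms(2)] by (auto simp: card_insert_if)
qed

lemma stable_iff_bounds:
  assumes "2 \<le> n"
  shows "stable n c \<longleftrightarrow> c \<in> configs n \<and> (\<forall>i\<in>{1..n}. c i \<le> 2) \<and> c 1 \<le> 1 \<and> c n \<le> 1"
proof -
  have "(\<forall>i\<in>{1..n}. c i < Fn_deg n i) \<longleftrightarrow> (\<forall>i\<in>{1..n}. c i \<le> 2) \<and> c 1 \<le> 1 \<and> c n \<le> 1"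
    using assms by (auto simp: Fn_deg_eq)
  then show ?thesis by (simp add: stable_def)
qed

text \<open>The recurrent configurations with the boundary condition at the last site m dropped, so that
  restricting to [m - 1] stays in the family.\<close>

definition admissible :: "nat \<Rightarrow> (nat \<Rightarrow> nat) set" where
  "admissible m = {c \<in> configs m. (\<forall>i\<in>{1..m}. c i \<le> 2) \<and> c 1 \<le> 1 \<and> \<not> unseparated_zeros m c}"

lemma burnable_iff_admissible:
  assumes n2: "2 \<le> n"
  shows "burnable n c \<longleftrightarrow> c \<in> admissible n \<and> c n \<le> 1"
  unfolding burnable_def stable_iff_bounds[OF n2] admissible_def using no_forbidden_iff_not_unseparated_zeros by blast

text \<open>A zero of c that is not separated by a 2 from the right end m: placing a zero at m + 1
  would create unseparated zeros.\<close>

definition open_zero :: "nat \<Rightarrow> (nat \<Rightarrow> nat) \<Rightarrow> bool" where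
  "open_zero m c \<longleftrightarrow> (\<exists>a. 1 \<le> a \<and> a \<le> m \<and> c a = 0 \<and> (\<forall>t. a < t \<and> t \<le> m \<longrightarrow> c t \<noteq> 2))"

lemma finite_admissible: "finite (admissible m)"
proof -
  have "admissible m \<subseteq> {f. \<forall>x. (x \<in> {1..m} \<longrightarrow> f x \<in> {0..2}) \<and> (x \<notin> {1..m} \<longrightarrow> f x = 0)}"
    by (auto simp: admissible_def configs_def)
  moreover have "finite {f. \<forall>x. (x \<in> {1..m} \<longrightarrow> f x \<in> {0..2::nat}) \<and> (x \<notin> {1..m} \<longrightarrow> f x = 0)}"
    by (rule finite_set_of_finite_funs) auto
  ultimately show ?thesis by (rule finite_subset)
qed

context
  fixes m :: nat and c :: "nat \<Rightarrow> nat" and v :: nat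
  assumes m1: "1 \<le> m"
begin

lemma unseparated_zeros_upd_last:
  "unseparated_zeros (Suc m) (c(Suc m := v)) \<longleftrightarrow> unseparated_zeros m c \<or> (v = 0 \<and> open_zero m c)"
  (is "?L \<longleftrightarrow> ?R")
proof
  assume ?L
  then obtain a b where ab: "1 \<le> a" "a < b" "b \<le> Suc m" "(c(Suc m := v)) a = 0" "(c(Suc m := v)) b = 0"
    "\<forall>t. a < t \<and> t < b \<longrightarrow> (c(Suc m := v)) t \<noteq> 2" unfolding unseparated_zeros_def by blast
  show ?R
  proof (cases "b = Suc m")
    case True
    then show ?thesis using ab unfolding open_zero_def by (auto intro!: exI[of _ a])
  next
    case False
    then have "b \<le> m" using ab(3) by simp
    moreover have "c t \<noteq> 2" if "a < t" "t < b" for t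
      using ab(6)[rule_format, of t] that \<open>b \<le> m\<close> by simp
    ultimately have "unseparated_zeros m c" using ab unfolding unseparated_zeros_def
      by (intro exI[of _ a] exI[of _ b]) simp
    then show ?thesis ..
  qed
next
  assume ?R
  then show ?L
  proof
    assume "unseparated_zeros m c"
    then obtain a b where "1 \<le> a" "a < b" "b \<le> m" "c a = 0" "c b = 0" "\<forall>t. a < t \<and> t < b \<longrightarrow> c t \<noteq> 2"
      unfolding unseparated_zeros_def by blast
    then show ?L unfolding unseparated_zeros_def by (intro exI[of _ a] exI[of _ b]) auto
  next
    assume h: "v = 0 \<and> open_zero m c"
    then obtain a where "1 \<le> a" "a \<le> m" "c a = 0" "\<forall>t. a < t \<and> t \<le> m \<longrightarrow> c t \<noteq> 2"
      unfolding open_zero_def by blast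
    then show ?L using h unfolding unseparated_zeros_def by (intro exI[of _ a] exI[of _ "Suc m"]) auto
  qed
qed

lemma open_zero_upd_last:
  "open_zero (Suc m) (c(Suc m := v)) \<longleftrightarrow> v = 0 \<or> (v \<noteq> 2 \<and> open_zero m c)" (is "?L \<longleftrightarrow> ?R")
proof
  assume ?L
  then obtain a where a: "1 \<le> a" "a \<le> Suc m" "(c(Suc m := v)) a = 0"
    "\<forall>t. a < t \<and> t \<le> Suc m \<longrightarrow> (c(Suc m := v)) t \<noteq> 2" unfolding open_zero_def by blast
  show ?R
  proof (cases "a = Suc m")
    case True then show ?thesis using a(3) by simp
  next
    case False
    then have "a \<le> m" "v \<noteq> 2" using a(2) a(4)[rule_format, of "Suc m"] by auto
    moreover have "c t \<noteq> 2" if "a < t" "t \<le> m" for t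
      using a(4)[rule_format, of t] that by simp
    ultimately have "open_zero m c" using a unfolding open_zero_def by (intro exI[of _ a]) simp
    with \<open>v \<noteq> 2\<close> show ?thesis by blast
  qed
next
  assume ?R
  then show ?L
  proof
    assume "v = 0"
    then show ?L unfolding open_zero_def by (intro exI[of _ "Suc m"]) simp
  next
    assume h: "v \<noteq> 2 \<and> open_zero m c"
    then obtain a where a: "1 \<le> a" "a \<le> m" "c a = 0" "\<forall>t. a < t \<and> t \<le> m \<longrightarrow> c t \<noteq> 2"
      unfolding open_zero_def by blast
    have "(c(Suc m := v)) t \<noteq> 2" if "a < t" "t \<le> Suc m" for t
      using a(4)[rule_format, of t] h that by (cases "t = Suc m") auto
    then show ?L using a unfolding open_zero_def by (intro exI[of _ a]) simp
  qed
qed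

lemma grains_upd_last: "grains (Suc m) (c(Suc m := v)) = grains m c + v"
proof -
  have "grains (Suc m) (c(Suc m := v)) = grains m (c(Suc m := v)) + v"
    unfolding grains_def by simp
  moreover have "grains m (c(Suc m := v)) = grains m c"
    unfolding grains_def by (rule sum.cong) auto
  ultimately show ?thesis by simp
qed

lemma admissible_upd_last_iff:
  assumes cc: "c \<in> configs m"
  shows "c(Suc m := v) \<in> admissible (Suc m) \<longleftrightarrow> c \<in> admissible m \<and> v \<le> 2 \<and> \<not> (v = 0 \<and> open_zero m c)"
proof -
  have cf: "c(Suc m := v) \<in> configs (Suc m)" using cc by (auto simp: configs_def)
  have vals: "(\<forall>i\<in>{1..Suc m}. (c(Suc m := v)) i \<le> 2) \<longleftrightarrow> (\<forall>i\<in>{1..m}. c i \<le> 2) \<and> v \<le> 2"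
    by (auto simp: le_Suc_eq)
  have one: "(c(Suc m := v)) 1 = c 1" using m1 by simp
  show ?thesis unfolding admissible_def using cf cc vals one unseparated_zeros_upd_last by auto
qed

end

lemma configs_Suc_decomp:
  assumes "c' \<in> configs (Suc m)"
  shows "c'(Suc m := 0) \<in> configs m" "c' = (c'(Suc m := 0))(Suc m := c' (Suc m))"
  using assms by (auto simp: configs_def le_Suc_eq)

lemma inj_on_upd_last: "inj_on (\<lambda>(v, c). c(Suc m := v)) (UNIV \<times> configs m)"
proof (rule inj_onI, clarsimp)
  fix v c v' c' assume "c \<in> configs m" "c' \<in> configs m" and eq: "c(Suc m := v) = c'(Suc m := v')"
  then have "c (Suc m) = 0" "c' (Suc m) = 0" by (auto simp: configs_def)
  then show "v = v' \<and> c = c'" using eq by (metis fun_upd_same fun_upd_triv fun_upd_upd)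
qed

lemma admissible_SucE:
  assumes m1: "1 \<le> m" and c': "c' \<in> admissible (Suc m)"
  obtains c v where "c \<in> admissible m" "v \<le> 2" "\<not> (v = 0 \<and> open_zero m c)" "c' = c(Suc m := v)"
proof -
  have xc: "c' \<in> configs (Suc m)" using c' by (auto simp: admissible_def)
  let ?c = "c'(Suc m := 0)" and ?v = "c' (Suc m)"
  have d: "?c \<in> configs m" "c' = ?c(Suc m := ?v)" by (rule configs_Suc_decomp[OF xc])+
  then have "?c \<in> admissible m \<and> ?v \<le> 2 \<and> \<not> (?v = 0 \<and> open_zero m ?c)" using admissible_upd_last_iff[OF m1 d(1), of ?v] c' by auto
  then show ?thesis using that d(2) by blast
qed

lemma sum_admissible_Suc:
  assumes m1: "1 \<le> m"
  shows "(\<Sum>c'\<in>{c'\<in>admissible (Suc m). R c'}. f c') =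
         (\<Sum>v\<in>{0,1,2::nat}. \<Sum>c\<in>{c\<in>admissible m. \<not> (v = 0 \<and> open_zero m c) \<and> R (c(Suc m := v))}. f (c(Suc m := v)))"
proof -
  let ?Sig = "SIGMA v:{0,1,2::nat}. {c\<in>admissible m. \<not> (v = 0 \<and> open_zero m c) \<and> R (c(Suc m := v))}"
  let ?h = "\<lambda>(v, c). c(Suc m := v)"
  have inj: "inj_on ?h ?Sig"
    by (rule inj_on_subset[OF inj_on_upd_last]) (auto simp: admissible_def)
  have img: "?h ` ?Sig = {c'\<in>admissible (Suc m). R c'}"
  proof (intro equalityI subsetI)
    fix x assume "x \<in> ?h ` ?Sig"
    then obtain v c where x: "x = c(Suc m := v)" and vc: "(v, c) \<in> ?Sig" by auto
    have "c \<in> configs m" using vc by (auto simp: admissible_def)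
    then show "x \<in> {c'\<in>admissible (Suc m). R c'}" using admissible_upd_last_iff[OF m1, of c v] vc x by auto
  next
    fix x assume x: "x \<in> {c'\<in>admissible (Suc m). R c'}"
    then obtain c v where "c \<in> admissible m" "v \<le> 2" "\<not> (v = 0 \<and> open_zero m c)" "x = c(Suc m := v)"
      using admissible_SucE[OF m1] by blast
    then show "x \<in> ?h ` ?Sig" using x by (intro image_eqI[of _ _ "(v, c)"]) auto
  qed
  have "(\<Sum>c'\<in>{c'\<in>admissible (Suc m). R c'}. f c') = (\<Sum>(v, c)\<in>?Sig. f (c(Suc m := v)))"
    unfolding img[symmetric] by (subst sum.reindex[OF inj]) (simp add: comp_def case_prod_beta')
  also have "\<dots> = (\<Sum>v\<in>{0,1,2::nat}. \<Sum>c\<in>{c\<in>admissible m. \<not> (v = 0 \<and> open_zero m c) \<and> R (c(Suc m := v))}. f (c(Suc m := v)))"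
    by (rule sum.Sigma[symmetric]) (auto intro: finite_subset[OF _ finite_admissible])
  finally show ?thesis .
qed

lemma grains_admissible_bounds:
  "1 \<le> m \<Longrightarrow> c \<in> admissible m \<Longrightarrow> grains m c + 1 \<le> 2 * m \<and> m \<le> grains m c + 1 \<and> (\<not> open_zero m c \<longrightarrow> m \<le> grains m c)"
proof (induction m arbitrary: c rule: dec_induct)
  case base
  then have c1: "c 1 \<le> 1" by (auto simp: admissible_def)
  have t: "grains 1 c = c 1" by (simp add: grains_def)
  have "\<not> open_zero 1 c \<longrightarrow> c 1 \<noteq> 0" unfolding open_zero_def by (intro impI) auto
  then show ?case using c1 t by auto
next
  case (step m)
  have m1: "1 \<le> m" using step.hyps by simp
  obtain c0 v where h: "c0 \<in> admissible m" "v \<le> 2" "\<not> (v = 0 \<and> open_zero m c0)" "c = c0(Suc m := v)"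
    using admissible_SucE[OF m1 step.prems] by blast
  have IH: "grains m c0 + 1 \<le> 2 * m" "m \<le> grains m c0 + 1" "\<not> open_zero m c0 \<longrightarrow> m \<le> grains m c0"
    using step.IH[OF h(1)] by auto
  have t: "grains (Suc m) c = grains m c0 + v" using grains_upd_last[OF m1] h(4) by simp
  have a: "open_zero (Suc m) c \<longleftrightarrow> v = 0 \<or> (v \<noteq> 2 \<and> open_zero m c0)" using open_zero_upd_last[OF m1] h(4) by simp
  show ?case
  proof (intro conjI impI)
    show "grains (Suc m) c + 1 \<le> 2 * Suc m" using t IH h(2) by simp
    show "Suc m \<le> grains (Suc m) c + 1" using t IH h(2,3) by (cases "v = 0") auto
    assume "\<not> open_zero (Suc m) c"
    then have "v \<noteq> 0" "v = 2 \<or> \<not> open_zero m c0" using a by auto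
    then show "Suc m \<le> grains (Suc m) c" using t IH by auto
  qed
qed

definition admissible_closed_gf :: "real \<Rightarrow> nat \<Rightarrow> real" where
  "admissible_closed_gf y m = (\<Sum>c\<in>{c\<in>admissible m. \<not> open_zero m c}. y ^ (grains m c - m))"
definition admissible_open_gf :: "real \<Rightarrow> nat \<Rightarrow> real" where
  "admissible_open_gf y m = (\<Sum>c\<in>{c\<in>admissible m. open_zero m c}. y ^ (grains m c + 1 - m))"

lemma sum_over_0_1_2: "(\<Sum>v\<in>{0,1,2::nat}. (g v :: real)) = g 0 + g 1 + g 2"
  by (simp add: add.assoc)

lemma admissible_gf_split:
  assumes m1: "1 \<le> m"
  shows "(\<Sum>c\<in>admissible m. y ^ (grains m c + 1 - m)) = y * admissible_closed_gf y m + admissible_open_gf y m"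
proof -
  have fin: "finite {c\<in>admissible m. \<not> open_zero m c}" "finite {c\<in>admissible m. open_zero m c}"
    using finite_admissible by auto
  have "admissible m = {c\<in>admissible m. \<not> open_zero m c} \<union> {c\<in>admissible m. open_zero m c}" by auto
  then have "(\<Sum>c\<in>admissible m. y ^ (grains m c + 1 - m)) =
     (\<Sum>c\<in>{c\<in>admissible m. \<not> open_zero m c}. y ^ (grains m c + 1 - m)) + (\<Sum>c\<in>{c\<in>admissible m. open_zero m c}. y ^ (grains m c + 1 - m))"
    using sum.union_disjoint[OF fin] by (metis (no_types, lifting) disjoint_iff mem_Collect_eq)
  also have "(\<Sum>c\<in>{c\<in>admissible m. \<not> open_zero m c}. y ^ (grains m c + 1 - m)) = y * admissible_closed_gf y m"
  proof -
    have "(\<Sum>c\<in>{c\<in>admissible m. \<not> open_zero m c}. y ^ (grains m c + 1 - m)) = (\<Sum>c\<in>{c\<in>admissible m. \<not> open_zero m c}. y * y ^ (grains m c - m))"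
    proof (rule sum.cong[OF refl])
      fix c assume "c \<in> {c\<in>admissible m. \<not> open_zero m c}"
      then have "m \<le> grains m c" using grains_admissible_bounds[OF m1] by auto
      then have "grains m c + 1 - m = Suc (grains m c - m)" by simp
      then show "y ^ (grains m c + 1 - m) = y * y ^ (grains m c - m)" by simp
    qed
    then show ?thesis by (simp add: admissible_closed_gf_def sum_distrib_left)
  qed
  finally show ?thesis by (simp add: admissible_open_gf_def)
qed

lemma admissible_closed_gf_Suc:
  assumes m1: "1 \<le> m"
  shows "admissible_closed_gf y (Suc m) = (1 + y) * admissible_closed_gf y m + admissible_open_gf y m"
proof -
  let ?f = "\<lambda>c'. y ^ (grains (Suc m) c' - Suc m)"
  have "admissible_closed_gf y (Suc m) = (\<Sum>v\<in>{0,1,2::nat}. \<Sum>c\<in>{c\<in>admissible m. \<not> (v = 0 \<and> open_zero m c) \<and> \<not> open_zero (Suc m) (c(Suc m := v))}. ?f (c(Suc m := v)))"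
    unfolding admissible_closed_gf_def by (rule sum_admissible_Suc[OF m1])
  also have "\<dots> = (\<Sum>c\<in>{c\<in>admissible m. \<not> open_zero m c}. y ^ (grains m c - m)) + (\<Sum>c\<in>admissible m. y ^ (grains m c + 1 - m))"
  proof -
    have s0: "{c\<in>admissible m. \<not> (0 = 0 \<and> open_zero m c) \<and> \<not> open_zero (Suc m) (c(Suc m := 0))} = {}"
      using open_zero_upd_last[OF m1] by auto
    have s1: "{c\<in>admissible m. \<not> ((1::nat) = 0 \<and> open_zero m c) \<and> \<not> open_zero (Suc m) (c(Suc m := 1))} = {c\<in>admissible m. \<not> open_zero m c}"
      using open_zero_upd_last[OF m1] by auto
    have s2: "{c\<in>admissible m. \<not> ((2::nat) = 0 \<and> open_zero m c) \<and> \<not> open_zero (Suc m) (c(Suc m := 2))} = admissible m"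
      using open_zero_upd_last[OF m1] by auto
    have f1: "?f (c(Suc m := 1)) = y ^ (grains m c - m)" for c using grains_upd_last[OF m1] by simp
    have f2: "?f (c(Suc m := 2)) = y ^ (grains m c + 1 - m)" for c using grains_upd_last[OF m1] by simp
    show ?thesis unfolding sum_over_0_1_2 s0 s1 s2 f1 f2 by simp
  qed
  also have "\<dots> = (1 + y) * admissible_closed_gf y m + admissible_open_gf y m"
    unfolding admissible_gf_split[OF m1] admissible_closed_gf_def by (simp add: algebra_simps)
  finally show ?thesis .
qed

lemma admissible_open_gf_Suc:
  assumes m1: "1 \<le> m"
  shows "admissible_open_gf y (Suc m) = admissible_closed_gf y m + admissible_open_gf y m"
proof -
  let ?f = "\<lambda>c'. y ^ (grains (Suc m) c' + 1 - Suc m)"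
  have "admissible_open_gf y (Suc m) = (\<Sum>v\<in>{0,1,2::nat}. \<Sum>c\<in>{c\<in>admissible m. \<not> (v = 0 \<and> open_zero m c) \<and> open_zero (Suc m) (c(Suc m := v))}. ?f (c(Suc m := v)))"
    unfolding admissible_open_gf_def by (rule sum_admissible_Suc[OF m1])
  also have "\<dots> = admissible_closed_gf y m + admissible_open_gf y m"
  proof -
    have s0: "{c\<in>admissible m. \<not> (0 = 0 \<and> open_zero m c) \<and> open_zero (Suc m) (c(Suc m := 0))} = {c\<in>admissible m. \<not> open_zero m c}"
      using open_zero_upd_last[OF m1] by auto
    have s1: "{c\<in>admissible m. \<not> ((1::nat) = 0 \<and> open_zero m c) \<and> open_zero (Suc m) (c(Suc m := 1))} = {c\<in>admissible m. open_zero m c}"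
      using open_zero_upd_last[OF m1] by auto
    have s2: "{c\<in>admissible m. \<not> ((2::nat) = 0 \<and> open_zero m c) \<and> open_zero (Suc m) (c(Suc m := 2))} = {}"
      using open_zero_upd_last[OF m1] by auto
    have f0: "?f (c(Suc m := 0)) = y ^ (grains m c - m)" for c using grains_upd_last[OF m1] by simp
    have f1: "?f (c(Suc m := 1)) = y ^ (grains m c + 1 - m)" for c using grains_upd_last[OF m1] by simp
    show ?thesis unfolding sum_over_0_1_2 s0 s1 s2 f0 f1 admissible_closed_gf_def admissible_open_gf_def by simp
  qed
  finally show ?thesis .
qed

lemma admissible_1: "c \<in> admissible 1 \<longleftrightarrow> c = (\<lambda>j. 0) \<or> c = (\<lambda>j. if j = 1 then 1 else 0)"
proof
  assume c: "c \<in> admissible 1"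
  then have c1: "c 1 \<le> 1" and z: "\<And>j. j \<noteq> 1 \<Longrightarrow> c j = 0" by (auto simp: admissible_def configs_def)
  show "c = (\<lambda>j. 0) \<or> c = (\<lambda>j. if j = 1 then 1 else 0)"
  proof (cases "c 1 = 0")
    case True
    then have "c = (\<lambda>j. 0)" using z by (intro ext) (metis)
    then show ?thesis by simp
  next
    case False
    then have "c 1 = 1" using c1 by simp
    then have "c = (\<lambda>j. if j = 1 then 1 else 0)" using z by (intro ext) auto
    then show ?thesis by simp
  qed
next
  assume "c = (\<lambda>j. 0) \<or> c = (\<lambda>j. if j = 1 then 1 else 0)"
  then show "c \<in> admissible 1" by (auto simp: admissible_def configs_def unseparated_zeros_def)
qed

lemma open_zero_1: "open_zero 1 c \<longleftrightarrow> c 1 = 0"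
  unfolding open_zero_def by auto

lemma admissible_gf_1: "admissible_closed_gf y 1 = 1" "admissible_open_gf y 1 = 1"
proof -
  have a: "{c\<in>admissible 1. \<not> open_zero 1 c} = {(\<lambda>j. if j = 1 then 1 else 0)}"
    using admissible_1 open_zero_1 by auto
  have b: "{c\<in>admissible 1. open_zero 1 c} = {(\<lambda>j. 0)}"
    using admissible_1 open_zero_1 by auto
  show "admissible_closed_gf y 1 = 1" unfolding admissible_closed_gf_def a by (simp add: grains_def)
  show "admissible_open_gf y 1 = 1" unfolding admissible_open_gf_def b by (simp add: grains_def)
qed

lemma admissible_closed_gf_eq_fan_gf: "1 \<le> m \<Longrightarrow> admissible_closed_gf y m = fan_gf y m"
  by (rule eq_fan_gf_if_recursion[where g = "admissible_open_gf y"])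
     (simp_all add: admissible_gf_1[unfolded One_nat_def] admissible_closed_gf_Suc admissible_open_gf_Suc)

lemma recurrent_gf_eq_fan_gf:
  assumes m1: "1 \<le> m"
  shows "(\<Sum>c\<in>{c\<in>admissible (Suc m). c (Suc m) \<le> 1}. y ^ (grains (Suc m) c + 1 - Suc m)) = fan_gf y (Suc m)"
proof -
  let ?f = "\<lambda>c'. y ^ (grains (Suc m) c' + 1 - Suc m)"
  have "(\<Sum>c\<in>{c\<in>admissible (Suc m). c (Suc m) \<le> 1}. ?f c) =
     (\<Sum>v\<in>{0,1,2::nat}. \<Sum>c\<in>{c\<in>admissible m. \<not> (v = 0 \<and> open_zero m c) \<and> (c(Suc m := v)) (Suc m) \<le> 1}. ?f (c(Suc m := v)))"
    by (rule sum_admissible_Suc[OF m1])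
  also have "\<dots> = admissible_closed_gf y m + (y * admissible_closed_gf y m + admissible_open_gf y m)"
  proof -
    have s0: "{c\<in>admissible m. \<not> (0 = 0 \<and> open_zero m c) \<and> (c(Suc m := 0)) (Suc m) \<le> 1} = {c\<in>admissible m. \<not> open_zero m c}"
      by auto
    have s1: "{c\<in>admissible m. \<not> ((1::nat) = 0 \<and> open_zero m c) \<and> (c(Suc m := 1)) (Suc m) \<le> 1} = admissible m"
      by auto
    have s2: "{c\<in>admissible m. \<not> ((2::nat) = 0 \<and> open_zero m c) \<and> (c(Suc m := 2)) (Suc m) \<le> 1} = {}"
      by auto
    have f0: "?f (c(Suc m := 0)) = y ^ (grains m c - m)" for c using grains_upd_last[OF m1] by simp
    have f1: "?f (c(Suc m := 1)) = y ^ (grains m c + 1 - m)" for c using grains_upd_last[OF m1] by simp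
    show ?thesis unfolding sum_over_0_1_2 s0 s1 s2 f0 f1 admissible_gf_split[OF m1] admissible_closed_gf_def by simp
  qed
  also have "\<dots> = admissible_closed_gf y (Suc m)" using admissible_closed_gf_Suc[OF m1] by (simp add: algebra_simps)
  also have "\<dots> = fan_gf y (Suc m)" using admissible_closed_gf_eq_fan_gf by simp
  finally show ?thesis .
qed

lemma spokes_eq: "{{0, i} | i. 1 \<le> i \<and> i \<le> n} = (\<lambda>i. {0, i}) ` {1..n}"
  by auto

lemma card_spokes: "card {{0, i} | i. 1 \<le> i \<and> i \<le> (n::nat)} = n"
proof -
  have "inj_on (\<lambda>i. {0::nat, i}) {1..n}" by (intro inj_onI) (auto simp: doubleton_eq_iff)
  then show ?thesis unfolding spokes_eq by (simp add: card_image)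
qed

lemma card_Pn_edges: "card (Pn_edges n) = n - 1"
proof -
  have "inj_on (\<lambda>i. {i, i + 1}) {1..<n}" by (intro inj_onI) (auto simp: doubleton_eq_iff)
  then show ?thesis unfolding Pn_edges_img by (simp add: card_image)
qed

lemma card_Fn_edges: "1 \<le> n \<Longrightarrow> card (Fn_edges n) = 2 * n - 1"
proof -
  assume n1: "1 \<le> n"
  have disj: "Pn_edges n \<inter> {{0, i} | i. 1 \<le> i \<and> i \<le> n} = {}"
    using Pn_edges_sub by fastforce
  have fin: "finite {{0, i} | i. 1 \<le> i \<and> i \<le> (n::nat)}" unfolding spokes_eq by simp
  have "card (Fn_edges n) = card (Pn_edges n) + card {{0, i} | i. 1 \<le> i \<and> i \<le> n}"
    unfolding Fn_edges_def by (rule card_Un_disjoint[OF _ fin disj]) simp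
  then show ?thesis using card_Pn_edges card_spokes n1 by simp
qed

lemma Fn_deg_sink: "Fn_deg n 0 = n"
proof -
  have "{e \<in> Fn_edges n. 0 \<in> e} = {{0, i} | i. 1 \<le> i \<and> i \<le> n}"
    using Pn_edges_sub by (fastforce simp: Fn_edges_def)
  then show ?thesis using card_spokes by (simp add: Fn_deg_def)
qed

lemma level_eq_grains: "1 \<le> n \<Longrightarrow> level n c = int (grains n c) + 1 - int n"
  unfolding level_def Fn_deg_sink card_Fn_edges grains_def by simp

lemma recurrent_eq_admissible:
  "2 \<le> n \<Longrightarrow> {c. ASM_recurrent n c} = {c \<in> admissible n. c n \<le> 1}"
  using ASM_recurrent_iff_burnable burnable_iff_admissible by blast

lemma recurrent_grains_bounds:
  assumes n2: "2 \<le> n" and c: "ASM_recurrent n c"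
  shows "n \<le> grains n c + 1" "grains n c + 1 - n \<le> n - 1"
proof -
  obtain m where m: "n = Suc m" "1 \<le> m" using n2 by (metis Suc_le_D Suc_le_mono one_add_one plus_1_eq_Suc)
  have cP: "c \<in> admissible (Suc m)" "c (Suc m) \<le> 1" using c recurrent_eq_admissible[OF n2] m by auto
  then show "n \<le> grains n c + 1" using grains_admissible_bounds[of "Suc m" c] m by auto
  obtain c0 v where h: "c0 \<in> admissible m" "v \<le> 2" "\<not> (v = 0 \<and> open_zero m c0)" "c = c0(Suc m := v)"
    using admissible_SucE[OF m(2) cP(1)] by blast
  have "v \<le> 1" using h(4) cP(2) by simp
  moreover have "grains n c = grains m c0 + v" using grains_upd_last[OF m(2)] h(4) m(1) by simp
  moreover have "grains m c0 + 1 \<le> 2 * m" using grains_admissible_bounds[OF m(2) h(1)] by simp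
  ultimately show "grains n c + 1 - n \<le> n - 1" using m by simp
qed

lemma fan_gf_recurrent_coeffs:
  assumes n2: "2 \<le> n"
  shows "fan_gf y n = (\<Sum>j\<le>n - 1. real (card {c. ASM_recurrent n c \<and> level n c = int j}) * y ^ j)"
proof -
  obtain m where m: "n = Suc m" "1 \<le> m" using n2 by (metis Suc_le_D Suc_le_mono one_add_one plus_1_eq_Suc)
  let ?R = "{c. ASM_recurrent n c}" and ?g = "\<lambda>c. grains n c + 1 - n"
  have fin: "finite ?R" using recurrent_eq_admissible[OF n2] finite_admissible by simp
  have "fan_gf y n = (\<Sum>c\<in>?R. y ^ ?g c)"
    using recurrent_gf_eq_fan_gf[OF m(2), of y] recurrent_eq_admissible[OF n2] m(1) by simp
  also have "\<dots> = (\<Sum>j\<le>n-1. real (card {c \<in> ?R. ?g c = j}) * y ^ j)"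
    by (rule sum_power_eq_card_coeffs[OF fin]) (use recurrent_grains_bounds[OF n2] in auto)
  also have "\<dots> = (\<Sum>j\<le>n - 1. real (card {c. ASM_recurrent n c \<and> level n c = int j}) * y ^ j)"
  proof (intro sum.cong refl)
    fix j
    have "{c \<in> ?R. ?g c = j} = {c. ASM_recurrent n c \<and> level n c = int j}"
      using recurrent_grains_bounds(1)[OF n2] level_eq_grains[of n] n2 by force
    then show "real (card {c \<in> ?R. ?g c = j}) * y ^ j
             = real (card {c. ASM_recurrent n c \<and> level n c = int j}) * y ^ j" by simp
  qed
  finally show ?thesis .
qed

lemma card_recurrent_level_eq_card_subgraphs:
  assumes "2 \<le> n" "k \<le> n - 1"
  shows "card {c. ASM_recurrent n c \<and> level n c = int k}
       = card {(V, E) \<in> subgraphs_Pn n. n \<in> V \<and> card E = k}"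
proof -
  have "1 \<le> n" using assms(1) by simp
  have "(\<Sum>j\<le>n-1. real (card {c. ASM_recurrent n c \<and> level n c = int j}) * y ^ j)
      = (\<Sum>j\<le>n-1. real (card {(V, E) \<in> subgraphs_Pn n. n \<in> V \<and> card E = j}) * y ^ j)" for y :: real
    using fan_gf_recurrent_coeffs[OF assms(1), of y] subgraph_gf_top_coeffs[OF \<open>1 \<le> n\<close>, of y]
      subgraph_gf_eq_fan_gf[of y n] by simp
  from coeffs_eq_if_polyfun_eq[OF this assms(2)] show ?thesis by simp
qed

lemma card_subgraphs_eq_card_Kimb:
  assumes "1 \<le> n" "k \<le> n - 1"
  shows "card {(V, E) \<in> subgraphs_Pn n. n \<in> V \<and> card E = k} = card (Kimb (n - k) k)"
proof -
  have "(\<Sum>j\<le>n-1. real (card {(V, E) \<in> subgraphs_Pn n. n \<in> V \<and> card E = j}) * y ^ j)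
      = (\<Sum>j\<le>n-1. real (card (Kimb (n - j) j)) * y ^ j)" for y :: real
    using subgraph_gf_top_coeffs[OF assms(1), of y] Kimb_gf_coeffs[OF assms(1), of y]
      subgraph_gf_eq_fan_gf[of y n] Kimb_gf_eq_fan_gf[OF assms(1), of y] by simp
  from coeffs_eq_if_polyfun_eq[OF this assms(2)] show ?thesis by simp
qed

lemma tutte_Fn_1_eq_Kimb_sum:
  assumes "1 \<le> n"
  shows "tutte (Fn_vertices n) (Fn_edges n) 1 y = (\<Sum>j=0..n-1. real (card (Kimb (n - j) j)) * y ^ j)"
proof -
  have "tutte (Fn_vertices n) (Fn_edges n) 1 y = fan_gf y n"
    using tutte_Fn_eq_connected_gf[OF assms] connected_gf_eq_fan_gf[OF assms] by simp
  also have "\<dots> = Kimb_gf y n" using Kimb_gf_eq_fan_gf[OF assms] by simp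
  also have "\<dots> = (\<Sum>j=0..n-1. real (card (Kimb (n - j) j)) * y ^ j)"
    using Kimb_gf_coeffs[OF assms] by (simp add: atLeast0AtMost)
  finally show ?thesis .
qed

lemma card_Kimb_diagonal:
  assumes "j \<le> n - 1" "1 \<le> n"
  shows "card (Kimb (n - j) j) = (\<Sum>r=0..n-j-1. ((n - j - 1) choose r) * ((r + j) choose r))"
  using card_Kimb[of "n - j" j] assms by simp

lemma finite_Kimb: "finite (Kimb i j)"
  by (rule finite_subset[OF _ finite_Kimb_antidiag[of "i + j"]]) (auto simp: Kimb_def Kimb_antidiag_def)

lemma finite_subgraphs_Pn: "finite (subgraphs_Pn n)"
  by (rule finite_subset[OF _ finite_subgraphs0[of n]]) (auto simp: subgraphs0_def subgraphs_Pn_def)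

theorem mainTheorem19:
  fixes n k :: nat
  assumes "2 \<le> n" and "k \<le> n - 1"
  shows "(\<exists>f. bij_betw f {c. ASM_recurrent n c \<and> level n c = int k}
                         {(V, E) \<in> subgraphs_Pn n. n \<in> V \<and> card E = k})
       \<and> (\<exists>g. bij_betw g {(V, E) \<in> subgraphs_Pn n. n \<in> V \<and> card E = k}
                         (Kimb (n - k) k))
       \<and> (\<forall>y::real. tutte (Fn_vertices n) (Fn_edges n) 1 y =
             (\<Sum>j=0..n-1. real (card (Kimb (n - j) j)) * y ^ j))
       \<and> (\<forall>j\<le>n-1. card (Kimb (n - j) j) =
             (\<Sum>r=0..n-j-1. ((n - j - 1) choose r) * ((r + j) choose r)))"
proof -
  have n1: "1 \<le> n" using assms(1) by simp
  let ?R = "{c. ASM_recurrent n c \<and> level n c = int k}"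
  let ?S = "{(V, E) \<in> subgraphs_Pn n. n \<in> V \<and> card E = k}"
  have finR: "finite ?R"
    by (rule finite_subset[OF _ finite_admissible[of n]]) (use recurrent_eq_admissible[OF assms(1)] in auto)
  have finS: "finite ?S" using finite_subgraphs_Pn by (rule finite_subset[rotated]) auto
  have "\<exists>f. bij_betw f ?R ?S"
    using finite_same_card_bij[OF finR finS] card_recurrent_level_eq_card_subgraphs[OF assms] by blast
  moreover have "\<exists>g. bij_betw g ?S (Kimb (n - k) k)"
    using finite_same_card_bij[OF finS finite_Kimb] card_subgraphs_eq_card_Kimb[OF n1 assms(2)] by blast
  moreover have "\<forall>y. tutte (Fn_vertices n) (Fn_edges n) 1 y = (\<Sum>j=0..n-1. real (card (Kimb (n - j) j)) * y ^ j)"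
    using tutte_Fn_1_eq_Kimb_sum[OF n1] by blast
  moreover have "\<forall>j\<le>n-1. card (Kimb (n - j) j) = (\<Sum>r=0..n-j-1. ((n - j - 1) choose r) * ((r + j) choose r))"
    using card_Kimb_diagonal n1 by blast
  ultimately show ?thesis by blast
qed

end
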